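(* Under the assumptions of the preceding lemma ($k,l\ge0$, $k+l\le d$, $X_1,\dots,X_k$ independent standard Gaussian in $\mathbb{R}^d$, $Y_1,\dots,Y_l$ arbitrary random vectors in $\mathbb{R}^d$ independent of the $X$'s), for every $p>0$, $$\mathbb E|\mathrm{conv}(0,X_1,\dots,X_k,Y_1,\dots,Y_l)|^p=\Bigg[\frac{2^{k/2}\,l!}{(k+l)!}\Bigg]^p\prod_{i=d-l-k+1}^{d-l}\frac{\Gamma(\frac{i+p}2)}{\Gamma(\frac i2)}\;\mathbb E|\mathrm{conv}(0,Y_1,\dots,Y_l)|^p.$$
   Context: $|\mathrm{conv}(0,Z_1,\dots,Z_j)|$ denotes the $j$-dimensional volume of the simplex with vertices $0,Z_1,\dots,Z_j$ (with value $1$ when $j=0$). *)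

theory Defs
  imports "HOL-Probability.Probability"
begin

definition std_gaussian_density :: "real ^ 'd \<Rightarrow> real" where
  "std_gaussian_density x = (\<Prod>j\<in>UNIV. std_normal_density (x $ j))"

definition gram_det :: "nat \<Rightarrow> (nat \<Rightarrow> real ^ 'd) \<Rightarrow> real" where
  "gram_det j Z = (\<Sum>p | p permutes {..<j}. of_int (sign p) * (\<Prod>a<j. inner (Z a) (Z (p a))))"

text \<open>j-dimensional volume of the simplex conv(0, Z 0, ..., Z (j-1)); equals 1 for j = 0.\<close>
definition simplex_vol :: "nat \<Rightarrow> (nat \<Rightarrow> real ^ 'd) \<Rightarrow> real" where
  "simplex_vol j Z = sqrt (gram_det j Z) / fact j"

end

(* Write G for the Gram determinant, so that the volume of conv(0, Z_1, ..., Z_j) is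
   sqrt (G (Z_1, ..., Z_j)) / j!.  If w is the component of t orthogonal to the span V of
   y_1, ..., y_l, then G (t, y_1, ..., y_l) = |w|^2 G (y_1, ..., y_l).  When t is a standard
   Gaussian vector and dim V = l, invariance of the Gaussian under a rotation taking d - l
   coordinate axes onto the orthogonal complement of V makes |w|^2 a chi-square variable with
   d - l degrees of freedom, whose moment of
   order p/2 is 2^(p/2) Gamma ((d - l + p) / 2) / Gamma ((d - l) / 2).  By independence and Fubini
   the vectors X_k, ..., X_1 can be integrated out one at a time, each contributing one factor of
   the product; the powers of 2 and the factorials then give the constant of the theorem. *)

theory Submission
  imports Defs "Jordan_Normal_Form.Determinant" "HOL-Library.Numeral_Type"
begin

no_notation Matrix.scalar_prod (infix "\<bullet>" 70)
hide_const (open) Determinant.det Matrix.mat Matrix.row Matrix.orthogonal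

section \<open>Gram determinants\<close>

definition gram_mat :: "nat \<Rightarrow> (nat \<Rightarrow> real^'d) \<Rightarrow> real Matrix.mat" where
  "gram_mat j Z = Matrix.mat j j (\<lambda>(a, b). Z a \<bullet> Z b)"

lemma gram_mat_carrier: "gram_mat j Z \<in> carrier_mat j j"
  by (simp add: gram_mat_def)

lemma gram_det_eq_det: "gram_det j Z = Determinant.det (gram_mat j Z)"
proof -
  have "Determinant.det (gram_mat j Z)
      = (\<Sum>p | p permutes {0..<j}. of_int (sign p) * (\<Prod>i = 0..<j. gram_mat j Z $$ (i, p i)))"
    by (simp add: Determinant.det_def gram_mat_def)
  also have "\<dots> = (\<Sum>p | p permutes {..<j}. of_int (sign p) * (\<Prod>a<j. Z a \<bullet> Z (p a)))"
  proof (rule sum.cong)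
    fix p
    assume "p \<in> {p. p permutes {..<j}}"
    then have "p a < j" if "a < j" for a
      using permutes_in_image[of p "{..<j}" a] that by simp
    then have "(\<Prod>i = 0..<j. gram_mat j Z $$ (i, p i)) = (\<Prod>a<j. Z a \<bullet> Z (p a))"
      unfolding atLeast0LessThan by (intro prod.cong) (simp_all add: gram_mat_def)
    then show "of_int (sign p) * (\<Prod>i = 0..<j. gram_mat j Z $$ (i, p i))
        = of_int (sign p) * (\<Prod>a<j. Z a \<bullet> Z (p a))"
      by simp
  qed (simp add: atLeast0LessThan)
  finally show ?thesis
    by (simp add: gram_det_def)
qed

lemma gram_det_cong: "(\<And>a. a < j \<Longrightarrow> Z a = Z' a) \<Longrightarrow> gram_det j Z = gram_det j Z'"
  unfolding gram_det_eq_det gram_mat_def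
  by (intro arg_cong[where f = Determinant.det] eq_matI) auto

lemma gram_det_0 [simp]: "gram_det 0 Z = 1"
  by (simp add: gram_det_def)

lemma gram_det_Suc_case_nat: "gram_det (Suc l) Z = gram_det (Suc l) (case_nat (Z 0) (Z \<circ> Suc))"
  by (rule gram_det_cong) (simp split: nat.split)

text \<open>Adding to the first vector a multiple of another one is a row and a column operation
  on the Gram matrix.\<close>

lemma gram_det_add_scaleR_first:
  assumes "i < l"
  shows "gram_det (Suc l) (case_nat (t + c *\<^sub>R y i) y) = gram_det (Suc l) (case_nat t y)"
proof -
  let ?A = "gram_mat (Suc l) (case_nat t y)"
  have eq: "gram_mat (Suc l) (case_nat (t + c *\<^sub>R y i) y) = addcol c 0 (Suc i) (addrow c 0 (Suc i) ?A)"
    using assms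
    by (intro eq_matI)
       (auto simp: gram_mat_def inner_commute algebra_simps split: nat.split)
  have "addrow c 0 (Suc i) ?A \<in> carrier_mat (Suc l) (Suc l)"
    by (simp add: gram_mat_def mat_addrow_def)
  then have "Determinant.det (addcol c 0 (Suc i) (addrow c 0 (Suc i) ?A)) = Determinant.det (addrow c 0 (Suc i) ?A)"
    using assms by (intro det_addcol) auto
  also have "\<dots> = Determinant.det ?A"
    using assms by (intro det_addrow[OF _ _ gram_mat_carrier]) auto
  finally show ?thesis
    unfolding gram_det_eq_det eq .
qed

lemma gram_det_add_span_first:
  assumes "v \<in> span (y ` {..<l})"
  shows "gram_det (Suc l) (case_nat (t + v) y) = gram_det (Suc l) (case_nat t y)"
  using assms
proof (induction v arbitrary: t rule: span_induct_alt)
  case base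
  show ?case by (simp only: add_0_right)
next
  case (step c x v)
  then obtain i where i: "i < l" "x = y i"
    by auto
  have "gram_det (Suc l) (case_nat (t + (c *\<^sub>R x + v)) y) = gram_det (Suc l) (case_nat ((t + v) + c *\<^sub>R y i) y)"
    by (simp add: i algebra_simps)
  also have "\<dots> = gram_det (Suc l) (case_nat t y)"
    by (simp only: gram_det_add_scaleR_first[OF i(1)] step.IH)
  finally show ?case .
qed

lemma gram_det_orthogonal_first:
  assumes "\<And>i. i < l \<Longrightarrow> w \<bullet> y i = 0"
  shows "gram_det (Suc l) (case_nat w y) = (w \<bullet> w) * gram_det l y"
proof -
  have eq: "gram_mat (Suc l) (case_nat w y) = four_block_mat (Matrix.mat 1 1 (\<lambda>_. w \<bullet> w))
      (Matrix.mat 1 l (\<lambda>(a, b). w \<bullet> y b)) (0\<^sub>m l 1) (gram_mat l y)"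
    using assms
    by (intro eq_matI) (auto simp: gram_mat_def four_block_mat_def inner_commute less_Suc_eq_0_disj)
  show ?thesis
    unfolding gram_det_eq_det eq
    by (subst det_four_block_mat_lower_left_zero_col) (auto simp: gram_mat_carrier Determinant.det_def)
qed

lemma gram_det_case_nat:
  assumes "t - w \<in> span (y ` {..<l})" and "\<And>i. i < l \<Longrightarrow> w \<bullet> y i = 0"
  shows "gram_det (Suc l) (case_nat t y) = (w \<bullet> w) * gram_det l y"
  using gram_det_add_span_first[OF assms(1), of w] gram_det_orthogonal_first[OF assms(2)] by simp

lemma gram_det_case_nat_decomp:
  obtains w where "t - w \<in> span (y ` {..<l})" and "\<And>i. i < l \<Longrightarrow> w \<bullet> y i = 0"
    and "gram_det (Suc l) (case_nat t y) = (w \<bullet> w) * gram_det l y"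
proof -
  obtain v w where v: "v \<in> span (y ` {..<l})" and orth: "\<And>u. u \<in> span (y ` {..<l}) \<Longrightarrow> orthogonal w u"
    and t: "t = v + w"
    using orthogonal_subspace_decomp_exists[of "y ` {..<l}" t] by blast
  have w_orth: "w \<bullet> y i = 0" if "i < l" for i
    using orth[of "y i"] that by (simp add: span_base real_inner_class.orthogonal_def)
  have tw: "t - w \<in> span (y ` {..<l})"
    using v by (simp add: t)
  show thesis
    by (rule that[OF tw w_orth gram_det_case_nat[OF tw w_orth]])
qed

lemma gram_det_Suc_decomp:
  fixes Z :: "nat \<Rightarrow> real^'d"
  obtains w where "Z 0 - w \<in> span ((Z \<circ> Suc) ` {..<l})" and "\<And>i. i < l \<Longrightarrow> w \<bullet> Z (Suc i) = 0"
    and "gram_det (Suc l) Z = (w \<bullet> w) * gram_det l (Z \<circ> Suc)"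
proof -
  obtain w where w: "Z 0 - w \<in> span ((Z \<circ> Suc) ` {..<l})" "\<And>i. i < l \<Longrightarrow> w \<bullet> (Z \<circ> Suc) i = 0"
    and G: "gram_det (Suc l) (case_nat (Z 0) (Z \<circ> Suc)) = (w \<bullet> w) * gram_det l (Z \<circ> Suc)"
    using gram_det_case_nat_decomp[of "Z 0" "Z \<circ> Suc" l] by blast
  show thesis
  proof (rule that)
    show "w \<bullet> Z (Suc i) = 0" if "i < l" for i
      using w(2)[OF that] by simp
    show "gram_det (Suc l) Z = (w \<bullet> w) * gram_det l (Z \<circ> Suc)"
      by (rule trans[OF gram_det_Suc_case_nat G])
  qed (fact w(1))
qed

lemma gram_det_nonneg:
  fixes Z :: "nat \<Rightarrow> real^'d"
  shows "gram_det l Z \<ge> 0"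
proof (induction l arbitrary: Z)
  case (Suc l)
  obtain w :: "real^'d" where "gram_det (Suc l) Z = (w \<bullet> w) * gram_det l (Z \<circ> Suc)"
    using gram_det_Suc_decomp[of Z l] by blast
  then show ?case
    using Suc.IH[of "Z \<circ> Suc"] inner_ge_zero[of w] by (simp only: mult_nonneg_nonneg)
qed simp

lemma gram_det_pos_imp_dim:
  fixes Z :: "nat \<Rightarrow> real^'d"
  shows "gram_det l Z > 0 \<Longrightarrow> dim (Z ` {..<l}) = l"
proof (induction l arbitrary: Z)
  case (Suc l)
  let ?T = "(Z \<circ> Suc) ` {..<l}"
  obtain w where w: "Z 0 - w \<in> span ?T" "\<And>i. i < l \<Longrightarrow> w \<bullet> Z (Suc i) = 0"
    and G: "gram_det (Suc l) Z = (w \<bullet> w) * gram_det l (Z \<circ> Suc)"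
    using gram_det_Suc_decomp[of Z l] by blast
  have "w \<bullet> w > 0" and pos: "gram_det l (Z \<circ> Suc) > 0"
    using Suc.prems G gram_det_nonneg[of l "Z \<circ> Suc"] by (auto simp: zero_less_mult_iff)
  have "Z 0 \<notin> span ?T"
  proof
    assume "Z 0 \<in> span ?T"
    then have "w \<in> span ?T"
      using span_diff[OF \<open>Z 0 \<in> span ?T\<close> w(1)] by simp
    then have "orthogonal w w"
      using orthogonal_to_span[OF \<open>w \<in> span ?T\<close>, of w] w(2)
      by (auto simp: real_inner_class.orthogonal_def)
    with \<open>w \<bullet> w > 0\<close> show False
      by (simp add: real_inner_class.orthogonal_def)
  qed
  moreover have "Z ` {..<Suc l} = insert (Z 0) ?T"
    by (auto simp: lessThan_Suc_eq_insert_0 image_image)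
  ultimately show ?case
    using Suc.IH[OF pos] by (simp add: dim_insert)
qed simp

lemma borel_measurable_gram_det:
  assumes "\<And>a. a < j \<Longrightarrow> (\<lambda>\<omega>. Z \<omega> a) \<in> borel_measurable M"
  shows "(\<lambda>\<omega>. gram_det j (Z \<omega>)) \<in> borel_measurable M"
  unfolding gram_det_def
proof (intro borel_measurable_sum borel_measurable_times borel_measurable_const borel_measurable_prod
    borel_measurable_inner)
  fix p a
  assume "p \<in> {p. p permutes {..<j}}" and a: "a \<in> {..<j}"
  then show "(\<lambda>\<omega>. Z \<omega> (p a)) \<in> borel_measurable M"
    using permutes_in_image[of p "{..<j}" a] by (auto intro: assms)
  show "(\<lambda>\<omega>. Z \<omega> a) \<in> borel_measurable M"
    using a by (auto intro: assms)
qed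

lemma simplex_vol_powr: "simplex_vol j Z powr p = gram_det j Z powr (p / 2) / fact j powr p"
proof -
  have "sqrt (gram_det j Z) powr p = gram_det j Z powr (p / 2)"
    using gram_det_nonneg[of j Z] by (simp add: powr_half_sqrt[symmetric] powr_powr)
  then show ?thesis
    by (simp add: simplex_vol_def powr_divide)
qed

section \<open>Invariance of Lebesgue measure under orthogonal transformations\<close>

lemma inner_sum_Basis_scaleR: "i \<in> Basis \<Longrightarrow> (\<Sum>b\<in>Basis. f b *\<^sub>R b) \<bullet> i = f i"
  by (simp add: inner_sum_left inner_Basis if_distrib[of "(*) _"] cong: if_cong)

definition basis_map :: "('a::euclidean_space \<Rightarrow> 'b::euclidean_space) \<Rightarrow> 'a \<Rightarrow> 'b" where
  "basis_map \<pi> x = (\<Sum>b\<in>Basis. (x \<bullet> b) *\<^sub>R \<pi> b)"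

lemma linear_basis_map: "linear (basis_map \<pi>)"
  unfolding basis_map_def
  by (rule linearI) (simp_all add: inner_add_left scaleR_add_left sum.distrib scaleR_sum_right)

lemma borel_measurable_linear:
  fixes f :: "'a::euclidean_space \<Rightarrow> 'b::euclidean_space"
  shows "linear f \<Longrightarrow> f \<in> borel_measurable borel"
  by (intro borel_measurable_continuous_onI linear_continuous_on) (simp add: linear_conv_bounded_linear[symmetric])

lemma borel_measurable_basis_map [measurable]: "basis_map \<pi> \<in> borel_measurable borel"
  by (rule borel_measurable_linear[OF linear_basis_map])

context
  fixes \<pi> :: "'a::euclidean_space \<Rightarrow> 'b::euclidean_space"
  assumes \<pi>: "bij_betw \<pi> Basis Basis"
begin

lemma inner_basis_map:
  assumes b: "b \<in> Basis"
  shows "basis_map \<pi> x \<bullet> \<pi> b = x \<bullet> b"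
proof -
  have \<pi>_orthonormal: "\<pi> b' \<bullet> \<pi> b = (if b' = b then 1 else 0)" if "b' \<in> Basis" for b'
    using b that bij_betwE[OF \<pi>] inj_on_eq_iff[OF bij_betw_imp_inj_on[OF \<pi>], of b' b]
    by (simp add: inner_Basis)
  have "basis_map \<pi> x \<bullet> \<pi> b = (\<Sum>b'\<in>Basis. (x \<bullet> b') * (\<pi> b' \<bullet> \<pi> b))"
    by (simp add: basis_map_def inner_sum_left)
  also have "\<dots> = (\<Sum>b'\<in>Basis. if b' = b then x \<bullet> b else 0)"
    by (rule sum.cong) (simp_all add: \<pi>_orthonormal)
  finally show ?thesis
    using b by simp
qed

lemma norm_basis_map: "norm (basis_map \<pi> x) = norm x"
proof -
  have "basis_map \<pi> x \<bullet> basis_map \<pi> x = (\<Sum>c\<in>Basis. (basis_map \<pi> x \<bullet> c)^2)"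
    by (subst euclidean_inner) (simp add: power2_eq_square)
  also have "\<dots> = (\<Sum>b\<in>Basis. (basis_map \<pi> x \<bullet> \<pi> b)^2)"
    by (rule sum.reindex_bij_betw[OF \<pi>, symmetric])
  also have "\<dots> = x \<bullet> x"
    by (subst euclidean_inner) (simp add: inner_basis_map power2_eq_square)
  finally show ?thesis
    by (simp add: norm_eq_sqrt_inner)
qed

lemma basis_map_inverse: "basis_map (inv_into Basis \<pi>) (basis_map \<pi> x) = x"
proof -
  have "basis_map (inv_into Basis \<pi>) (basis_map \<pi> x)
      = (\<Sum>b\<in>Basis. (basis_map \<pi> x \<bullet> \<pi> b) *\<^sub>R inv_into Basis \<pi> (\<pi> b))"
    unfolding basis_map_def[of "inv_into Basis \<pi>"] by (rule sum.reindex_bij_betw[OF \<pi>, symmetric])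
  also have "\<dots> = (\<Sum>b\<in>Basis. (x \<bullet> b) *\<^sub>R b)"
    by (rule sum.cong) (simp_all add: inner_basis_map inv_into_f_f[OF bij_betw_imp_inj_on[OF \<pi>]])
  also have "\<dots> = x"
    by (rule euclidean_representation)
  finally show ?thesis .
qed

lemma lborel_distr_basis_map: "distr lborel borel (basis_map \<pi>) = lborel"
proof (rule lborel_eqI[symmetric])
  fix l u :: 'b
  assume lu: "\<And>c. c \<in> Basis \<Longrightarrow> l \<bullet> c \<le> u \<bullet> c"
  define l' u' where "l' = (\<Sum>b\<in>Basis. (l \<bullet> \<pi> b) *\<^sub>R b)" and "u' = (\<Sum>b\<in>Basis. (u \<bullet> \<pi> b) *\<^sub>R b)"
  have [simp]: "l' \<bullet> b = l \<bullet> \<pi> b" "u' \<bullet> b = u \<bullet> \<pi> b" if "b \<in> Basis" for b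
    using that by (simp_all add: l'_def u'_def inner_sum_Basis_scaleR)
  have ball_Basis: "(\<forall>c\<in>Basis. P c) \<longleftrightarrow> (\<forall>b\<in>Basis. P (\<pi> b))" for P
    using bij_betw_imp_surj_on[OF \<pi>] by (metis imageE imageI)
  have "basis_map \<pi> -` box l u = box l' u'"
    unfolding mem_box vimage_def ball_Basis[where P = "\<lambda>c. l \<bullet> c < basis_map \<pi> _ \<bullet> c \<and> basis_map \<pi> _ \<bullet> c < u \<bullet> c"]
    by (simp add: inner_basis_map box_def)
  then have "emeasure (distr lborel borel (basis_map \<pi>)) (box l u) = emeasure lborel (box l' u')"
    by (simp add: emeasure_distr)
  also have "\<dots> = (\<Prod>b\<in>Basis. (u - l) \<bullet> \<pi> b)"
    using lu bij_betwE[OF \<pi>] by (simp add: emeasure_lborel_box_eq inner_diff_left)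
  also have "(\<Prod>b\<in>Basis. (u - l) \<bullet> \<pi> b) = (\<Prod>c\<in>Basis. (u - l) \<bullet> c)"
    by (rule prod.reindex_bij_betw[OF \<pi>])
  finally show "emeasure (distr lborel borel (basis_map \<pi>)) (box l u) = (\<Prod>c\<in>Basis. (u - l) \<bullet> c)" .
next
  show "sets (distr lborel borel (basis_map \<pi>)) = sets borel" by simp
qed

end

lemma lborel_distr_orthogonal_transformation_wellorder:
  fixes f :: "real^'n::{finite,wellorder} \<Rightarrow> real^'n::_"
  assumes f: "orthogonal_transformation f"
  shows "distr lborel borel f = lborel"
proof (rule lborel_eqI[symmetric])
  fix l u :: "real^'n::{finite,wellorder}"
  assume lu: "\<And>b. b \<in> Basis \<Longrightarrow> l \<bullet> b \<le> u \<bullet> b"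
  have g: "orthogonal_transformation (inv_into UNIV f)"
    by (rule orthogonal_transformation_inv[OF f])
  have "bij f"
    by (rule orthogonal_transformation_bij[OF f])
  then have pre: "f -` box l u = inv_into UNIV f ` box l u"
    by (simp add: bij_vimage_eq_inv_image)
  have f_meas: "f \<in> borel_measurable borel"
    using f by (simp add: borel_measurable_linear orthogonal_transformation_linear)
  have "emeasure (distr lborel borel f) (box l u) = emeasure lborel (f -` box l u)"
    using f_meas by (simp add: emeasure_distr)
  also have "\<dots> = emeasure lebesgue (inv_into UNIV f ` box l u)"
    using f_meas unfolding pre[symmetric] by (simp add: measurable_sets_borel)
  also have "\<dots> = measure lebesgue (box l u)"
    using measurable_orthogonal_image[OF g] measure_orthogonal_image[OF g]
    by (simp add: emeasure_eq_measure2)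
  also have "\<dots> = (\<Prod>b\<in>Basis. (u - l) \<bullet> b)"
    using lu by (simp add: measure_lborel_box_eq inner_diff_left)
  finally show "emeasure (distr lborel borel f) (box l u) = (\<Prod>b\<in>Basis. (u - l) \<bullet> b)" .
qed simp

text \<open>For an arbitrary finite index type the library's change of variables is not available, as it
  asks for a well-order on the indices. Doubling the dimension gives the index type \<open>'n bit0\<close>,
  which has one, and an orthogonal transformation of \<open>\<real>\<^sup>n\<close> extends to one of
  \<open>\<real>\<^sup>n \<times> \<real>\<^sup>n \<cong> \<real>\<^sup>2\<^sup>n\<close>.\<close>

lemma lborel_distr_orthogonal_transformation_Pair:
  fixes f :: "real^'n \<Rightarrow> real^'n"
  assumes f: "orthogonal_transformation f"
  shows "distr lborel borel (\<lambda>z::(real^'n) \<times> (real^'n). (f (fst z), snd z)) = lborel"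
proof -
  let ?F = "\<lambda>z::(real^'n) \<times> (real^'n). (f (fst z), snd z)"
  have "card (Basis :: ((real^'n) \<times> (real^'n)) set) = card (Basis :: (real^'n bit0) set)"
    by simp
  then obtain \<pi> :: "(real^'n) \<times> (real^'n) \<Rightarrow> real^'n bit0" where \<pi>: "bij_betw \<pi> Basis Basis"
    by (metis finite_Basis finite_same_card_bij)
  define \<rho> where "\<rho> = inv_into Basis \<pi>"
  have \<rho>: "bij_betw \<rho> Basis Basis"
    unfolding \<rho>_def by (rule bij_betw_inv_into[OF \<pi>])
  have lin_F: "linear ?F"
    using orthogonal_transformation_linear[OF f]
    by (intro linearI) (simp_all add: linear_add linear_scale)
  have norm_F: "norm (?F z) = norm z" for z
    using f by (cases z) (simp add: norm_Pair orthogonal_transformation)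
  define F' where "F' = basis_map \<pi> \<circ> ?F \<circ> basis_map \<rho>"
  have "orthogonal_transformation F'"
    unfolding orthogonal_transformation F'_def
    by (simp add: linear_compose lin_F linear_basis_map norm_F norm_basis_map[OF \<pi>] norm_basis_map[OF \<rho>])
  then have F': "distr lborel borel F' = lborel"
    by (rule lborel_distr_orthogonal_transformation_wellorder)
  have F_conj: "?F \<circ> basis_map \<rho> = basis_map \<rho> \<circ> F'"
    by (simp add: F'_def fun_eq_iff \<rho>_def basis_map_inverse[OF \<pi>])
  have [measurable]: "?F \<in> borel_measurable borel"
    by (rule borel_measurable_linear[OF lin_F])
  have "distr lborel borel ?F = distr (distr lborel borel (basis_map \<rho>)) borel ?F"
    by (simp add: lborel_distr_basis_map[OF \<rho>])
  also have "\<dots> = distr lborel borel (basis_map \<rho> \<circ> F')"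
    by (subst distr_distr) (simp_all add: F_conj)
  also have "\<dots> = distr (distr lborel borel F') borel (basis_map \<rho>)"
    using F' by (subst distr_distr) (auto simp: F'_def)
  also have "\<dots> = lborel"
    by (simp add: F' lborel_distr_basis_map[OF \<rho>])
  finally show ?thesis .
qed

lemma lborel_distr_orthogonal_transformation:
  fixes f :: "real^'n \<Rightarrow> real^'n"
  assumes f: "orthogonal_transformation f"
  shows "distr lborel borel f = lborel"
proof (rule measure_eqI)
  fix A :: "(real^'n) set"
  assume "A \<in> sets (distr lborel borel f)"
  then have A: "A \<in> sets borel"
    by simp
  have f_meas: "f \<in> borel_measurable borel"
    using f by (simp add: borel_measurable_linear orthogonal_transformation_linear)
  let ?F = "\<lambda>z::(real^'n) \<times> (real^'n). (f (fst z), snd z)"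
  let ?B = "cbox 0 One :: (real^'n) set"
  note Times = sigma_finite_measure.emeasure_pair_measure_Times[OF sigma_finite_lborel]
  have "linear ?F"
    using orthogonal_transformation_linear[OF f] by (intro linearI) (simp_all add: linear_add linear_scale)
  then have F_meas: "?F \<in> borel_measurable borel"
    by (rule borel_measurable_linear)
  have "A \<times> ?B \<in> sets borel"
    using A unfolding borel_prod[symmetric] by (intro pair_measureI) auto
  then have "emeasure lborel (?F -` (A \<times> ?B)) = emeasure lborel (A \<times> ?B)"
    using F_meas emeasure_distr[of ?F lborel borel "A \<times> ?B"] lborel_distr_orthogonal_transformation_Pair[OF f]
    by simp
  moreover have "?F -` (A \<times> ?B) = (f -` A) \<times> ?B"
    by auto
  moreover have "f -` A \<in> sets borel"
    by (rule measurable_sets_borel[OF f_meas A])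
  moreover have "emeasure lborel ?B = 1"
    by (simp add: emeasure_lborel_cbox_eq inner_Basis)
  ultimately show "emeasure (distr lborel borel f) A = emeasure lborel A"
    using A f_meas by (simp add: emeasure_distr lborel_prod[symmetric] Times)
qed simp

section \<open>Moments of chi distributions\<close>

definition chi_moment :: "nat \<Rightarrow> real \<Rightarrow> real" where
  "chi_moment n p = 2 powr (p / 2) * Gamma ((real n + p) / 2) / Gamma (real n / 2)"

lemma chi_moment_nonneg: "n > 0 \<Longrightarrow> p \<ge> 0 \<Longrightarrow> chi_moment n p \<ge> 0"
  unfolding chi_moment_def
  by (intro divide_nonneg_nonneg mult_nonneg_nonneg less_imp_le[OF Gamma_real_pos]) auto

text \<open>The value of \<open>symmetric_beta\<close> is never needed: the constant it contributes to the
  radial formula below is determined afterwards by normalisation.\<close>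

definition symmetric_beta :: "real \<Rightarrow> ennreal" where
  "symmetric_beta a = (\<integral>\<^sup>+t. ennreal (indicator {-1<..<1} t * (1 - t^2) powr (a - 1)) \<partial>lborel)"

lemma nn_integral_shifted_square_powr:
  fixes u a :: real
  assumes u: "u > 0"
  shows "(\<integral>\<^sup>+y. ennreal (indicator {0<..} (u - y^2) * (u - y^2) powr (a - 1)) \<partial>lborel)
       = symmetric_beta a * ennreal (u powr (a - 1/2))"
proof -
  have su: "sqrt u > 0" using u by simp
  have "(\<integral>\<^sup>+y. ennreal (indicator {0<..} (u - y^2) * (u - y^2) powr (a - 1)) \<partial>lborel)
     = ennreal \<bar>sqrt u\<bar> * (\<integral>\<^sup>+x. ennreal (indicator {0<..} (u - (0 + sqrt u * x)^2) * (u - (0 + sqrt u * x)^2) powr (a - 1)) \<partial>lborel)"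
    by (rule nn_integral_real_affine; use su in auto)
  also have "(\<integral>\<^sup>+x. ennreal (indicator {0<..} (u - (0 + sqrt u * x)^2) * (u - (0 + sqrt u * x)^2) powr (a - 1)) \<partial>lborel)
     = (\<integral>\<^sup>+x. ennreal (u powr (a - 1)) * ennreal (indicator {-1<..<1} x * (1 - x^2) powr (a - 1)) \<partial>lborel)"
  proof (rule nn_integral_cong)
    fix x :: real
    have e1: "u - (0 + sqrt u * x)^2 = u * (1 - x^2)"
      using u by (simp add: algebra_simps)
    have e2: "(0 < u * (1 - x^2)) = (x \<in> {-1<..<1})"
      using u by (auto simp: zero_less_mult_iff abs_square_less_1 abs_less_iff)
    have e3: "(u * (1 - x^2)) powr (a - 1) = u powr (a - 1) * (1 - x^2) powr (a - 1)" if "x \<in> {-1<..<1}"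
      using u that by (intro powr_mult; auto simp: abs_square_less_1 abs_less_iff)
    show "ennreal (indicator {0<..} (u - (0 + sqrt u * x)^2) * (u - (0 + sqrt u * x)^2) powr (a - 1))
       = ennreal (u powr (a - 1)) * ennreal (indicator {-1<..<1} x * (1 - x^2) powr (a - 1))"
      unfolding e1 using e2 e3
      by (cases "x \<in> {-1<..<1}") (auto simp: indicator_def ennreal_mult'[symmetric])
  qed
  also have "\<dots> = ennreal (u powr (a - 1)) * symmetric_beta a"
    unfolding symmetric_beta_def by (rule nn_integral_cmult) measurable
  finally have "(\<integral>\<^sup>+y. ennreal (indicator {0<..} (u - y^2) * (u - y^2) powr (a - 1)) \<partial>lborel)
     = ennreal (sqrt u) * ennreal (u powr (a - 1)) * symmetric_beta a"
    using su by (simp add: mult.assoc)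
  also have "ennreal (sqrt u) * ennreal (u powr (a - 1)) = ennreal (u powr (a - 1/2))"
  proof -
    have "sqrt u * u powr (a - 1) = u powr (a - 1/2)"
      using u by (simp add: powr_half_sqrt[symmetric] powr_add[symmetric])
    then show ?thesis using su by (simp add: ennreal_mult'[symmetric])
  qed
  finally show ?thesis by (simp add: mult.commute)
qed

lemma nn_integral_add_square_convolution:
  fixes g :: "real \<Rightarrow> ennreal" and a :: real
  assumes g[measurable]: "g \<in> borel_measurable borel"
  shows "(\<integral>\<^sup>+s. (\<integral>\<^sup>+y. g (y^2 + s) \<partial>lborel) * ennreal (indicator {0<..} s * s powr (a - 1)) \<partial>lborel)
       = symmetric_beta a * (\<integral>\<^sup>+u. g u * ennreal (indicator {0<..} u * u powr (a - 1/2)) \<partial>lborel)"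
proof -
  have "(\<integral>\<^sup>+s. (\<integral>\<^sup>+y. g (y^2 + s) \<partial>lborel) * ennreal (indicator {0<..} s * s powr (a - 1)) \<partial>lborel)
      = (\<integral>\<^sup>+s. (\<integral>\<^sup>+y. g (y^2 + s) * ennreal (indicator {0<..} s * s powr (a - 1)) \<partial>lborel) \<partial>lborel)"
    by (intro nn_integral_cong nn_integral_multc[symmetric]) measurable
  also have "\<dots> = (\<integral>\<^sup>+y. (\<integral>\<^sup>+s. g (y^2 + s) * ennreal (indicator {0<..} s * s powr (a - 1)) \<partial>lborel) \<partial>lborel)"
    by (rule lborel_pair.Fubini') measurable
  also have "\<dots> = (\<integral>\<^sup>+y. (\<integral>\<^sup>+u. g u * ennreal (indicator {0<..} (u - y^2) * (u - y^2) powr (a - 1)) \<partial>lborel) \<partial>lborel)"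
  proof (rule nn_integral_cong)
    fix y :: real
    have "(\<integral>\<^sup>+u. g u * ennreal (indicator {0<..} (u - y^2) * (u - y^2) powr (a - 1)) \<partial>lborel)
        = (\<integral>\<^sup>+u. g u * ennreal (indicator {0<..} (u - y^2) * (u - y^2) powr (a - 1)) \<partial>distr lborel borel ((+) (y^2)))"
      by (simp add: lborel_distr_plus)
    also have "\<dots> = (\<integral>\<^sup>+s. g (y^2 + s) * ennreal (indicator {0<..} s * s powr (a - 1)) \<partial>lborel)"
      by (subst nn_integral_distr) auto
    finally show "(\<integral>\<^sup>+s. g (y^2 + s) * ennreal (indicator {0<..} s * s powr (a - 1)) \<partial>lborel)
        = (\<integral>\<^sup>+u. g u * ennreal (indicator {0<..} (u - y^2) * (u - y^2) powr (a - 1)) \<partial>lborel)" ..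
  qed
  also have "\<dots> = (\<integral>\<^sup>+u. (\<integral>\<^sup>+y. g u * ennreal (indicator {0<..} (u - y^2) * (u - y^2) powr (a - 1)) \<partial>lborel) \<partial>lborel)"
    by (rule lborel_pair.Fubini') measurable
  also have "\<dots> = (\<integral>\<^sup>+u. g u * (\<integral>\<^sup>+y. ennreal (indicator {0<..} (u - y^2) * (u - y^2) powr (a - 1)) \<partial>lborel) \<partial>lborel)"
    by (intro nn_integral_cong nn_integral_cmult) measurable
  also have "\<dots> = (\<integral>\<^sup>+u. symmetric_beta a * (g u * ennreal (indicator {0<..} u * u powr (a - 1/2))) \<partial>lborel)"
  proof (rule nn_integral_cong)
    fix u :: real
    show "g u * (\<integral>\<^sup>+y. ennreal (indicator {0<..} (u - y^2) * (u - y^2) powr (a - 1)) \<partial>lborel)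
        = symmetric_beta a * (g u * ennreal (indicator {0<..} u * u powr (a - 1/2)))"
    proof (cases "u > 0")
      case True
      then show ?thesis by (simp add: nn_integral_shifted_square_powr mult_ac)
    next
      case False
      have "indicator {0<..} (u - y^2) = (0::real)" for y
        using False by (auto simp: indicator_def) (smt (verit) zero_le_power2)
      then show ?thesis using False by (simp add: indicator_def)
    qed
  qed
  also have "\<dots> = symmetric_beta a * (\<integral>\<^sup>+u. g u * ennreal (indicator {0<..} u * u powr (a - 1/2)) \<partial>lborel)"
    by (rule nn_integral_cmult) measurable
  finally show ?thesis .
qed

lemma nn_integral_square_substitution_Icc:
  fixes g :: "real \<Rightarrow> ennreal" and b :: real
  assumes g[measurable]: "g \<in> borel_measurable borel" and b: "b > 0"
  shows "(\<integral>\<^sup>+x. g (x^2) * indicator {0..b} x \<partial>lborel)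
       = (\<integral>\<^sup>+u. g u * ennreal (u powr (-1/2) / 2) * indicator {0..b^2} u \<partial>lborel)"
proof -
  have "(\<integral>\<^sup>+u. (g u * ennreal (u powr (-1/2) / 2)) * indicator {0^2..b^2} u \<partial>lborel)
      = (\<integral>\<^sup>+x. (g (x^2) * ennreal ((x^2) powr (-1/2) / 2)) * ennreal (2 * x) * indicator {0..b} x \<partial>lborel)"
    by (rule nn_integral_substitution_aux[where g = "\<lambda>x. x ^ 2" and g' = "\<lambda>x. 2 * x"])
       (use b in \<open>auto intro!: derivative_eq_intros continuous_intros\<close>)
  also have "\<dots> = (\<integral>\<^sup>+x. g (x^2) * indicator {0..b} x \<partial>lborel)"
  proof (intro nn_integral_cong_AE eventually_mono[OF AE_lborel_singleton[of 0]])
    fix x :: real assume x: "x \<noteq> 0"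
    show "g (x^2) * ennreal ((x^2) powr (-1/2) / 2) * ennreal (2 * x) * indicator {0..b} x
        = g (x^2) * indicator {0..b} x"
    proof (cases "x \<in> {0..b}")
      case True
      then have xp: "x > 0" using x by auto
      have "(x^2) powr (-1/2) / 2 * (2 * x) = 1"
        using xp by (simp add: powr_minus powr_half_sqrt field_split_simps)
      then have "ennreal ((x^2) powr (-1/2) / 2) * ennreal (2 * x) = 1"
        using xp by (simp add: ennreal_mult'[symmetric])
      then show ?thesis using True by (simp add: mult.assoc)
    qed simp
  qed
  finally show ?thesis by simp
qed

lemma nn_integral_square_substitution_Ici:
  fixes g :: "real \<Rightarrow> ennreal"
  assumes g[measurable]: "g \<in> borel_measurable borel"
  shows "(\<integral>\<^sup>+x. g (x^2) * indicator {0..} x \<partial>lborel)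
       = (\<integral>\<^sup>+u. g u * ennreal (u powr (-1/2) / 2) * indicator {0..} u \<partial>lborel)"
proof -
  define F where "F = (\<lambda>n::nat. \<lambda>x::real. g (x^2) * indicator {0..real (Suc n)} x)"
  define H where "H = (\<lambda>n::nat. \<lambda>u::real. g u * ennreal (u powr (-1/2) / 2) * indicator {0..(real (Suc n))^2} u)"
  have eq: "integral\<^sup>N lborel (F n) = integral\<^sup>N lborel (H n)" for n
    unfolding F_def H_def by (rule nn_integral_square_substitution_Icc) auto
  have "(\<lambda>n. integral\<^sup>N lborel (F n)) \<longlonglongrightarrow> (\<integral>\<^sup>+x. g (x^2) * indicator {0..} x \<partial>lborel)"
  proof (rule nn_integral_LIMSEQ)
    show "incseq F" unfolding F_def
      by (auto simp: incseq_def le_fun_def indicator_def intro!: mult_left_mono)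
    show "F i \<in> borel_measurable lborel" for i unfolding F_def by measurable
    fix x :: real
    show "(\<lambda>i. F i x) \<longlonglongrightarrow> g (x^2) * indicator {0..} x"
    proof (rule tendsto_eventually)
      obtain N :: nat where "x \<le> real N" using real_arch_simple by blast
      then show "\<forall>\<^sub>F i in sequentially. F i x = g (x^2) * indicator {0..} x"
        unfolding F_def eventually_sequentially
        by (intro exI[of _ N]) (auto simp: indicator_def)
    qed
  qed
  moreover have "(\<lambda>n. integral\<^sup>N lborel (H n)) \<longlonglongrightarrow> (\<integral>\<^sup>+u. g u * ennreal (u powr (-1/2) / 2) * indicator {0..} u \<partial>lborel)"
  proof (rule nn_integral_LIMSEQ)
    show "incseq H" unfolding H_def incseq_def le_fun_def
    proof (intro allI impI)
      fix m n :: nat and x :: real assume "m \<le> n"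
      have mn: "(real (Suc m))^2 \<le> (real (Suc n))^2" using \<open>m \<le> n\<close> by (intro power_mono) auto
      have "indicator {0..(real (Suc m))^2} x \<le> (indicator {0..(real (Suc n))^2} x :: ennreal)"
        unfolding indicator_def using order_trans[OF _ mn, of x] by auto
      then show "g x * ennreal (x powr (-1/2) / 2) * indicator {0..(real (Suc m))^2} x
          \<le> g x * ennreal (x powr (-1/2) / 2) * indicator {0..(real (Suc n))^2} x"
        by (intro mult_left_mono) auto
    qed
    show "H i \<in> borel_measurable lborel" for i unfolding H_def by measurable
    fix x :: real
    show "(\<lambda>i. H i x) \<longlonglongrightarrow> g x * ennreal (x powr (-1/2) / 2) * indicator {0..} x"
    proof (rule tendsto_eventually)
      obtain N :: nat where N: "x \<le> real N" using real_arch_simple by blast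
      have "x \<le> (real (Suc n))^2" if "n \<ge> N" for n
      proof -
        have "x \<le> real (Suc n)" using N that by simp
        also have "\<dots> \<le> (real (Suc n))^2" by (simp add: power2_eq_square)
        finally show ?thesis .
      qed
      then show "\<forall>\<^sub>F i in sequentially. H i x = g x * ennreal (x powr (-1/2) / 2) * indicator {0..} x"
        unfolding H_def eventually_sequentially
        by (intro exI[of _ N]) (auto simp: indicator_def)
    qed
  qed
  ultimately show ?thesis unfolding eq by (rule LIMSEQ_unique)
qed

lemma nn_integral_square_substitution:
  fixes g :: "real \<Rightarrow> ennreal"
  assumes g[measurable]: "g \<in> borel_measurable borel"
  shows "(\<integral>\<^sup>+y. g (y^2) \<partial>lborel)
       = (\<integral>\<^sup>+u. g u * ennreal (indicator {0<..} u * u powr (1/2 - 1)) \<partial>lborel)"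
proof -
  let ?I = "\<integral>\<^sup>+x. g (x^2) * indicator {0..} x \<partial>lborel"
  have refl: "(\<integral>\<^sup>+x. g (x^2) * indicator {..0} x \<partial>lborel) = ?I"
    by (subst nn_integral_real_affine[of _ "-1" 0])
       (auto simp: indicator_def intro!: nn_integral_cong)
  have "(\<integral>\<^sup>+y. g (y^2) \<partial>lborel) = (\<integral>\<^sup>+x. g (x^2) * indicator {..0} x + g (x^2) * indicator {0..} x \<partial>lborel)"
    by (intro nn_integral_cong_AE AE_I[of _ _ "{0}"]) (auto simp: indicator_def)
  also have "\<dots> = ?I + ?I"
    by (subst nn_integral_add) (auto simp: refl)
  also have "?I = (\<integral>\<^sup>+u. g u * ennreal (u powr (-1/2) / 2) * indicator {0..} u \<partial>lborel)"
    by (rule nn_integral_square_substitution_Ici) simp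
  also have "\<dots> + \<dots> = (\<integral>\<^sup>+u. g u * ennreal (u powr (-1/2) / 2) * indicator {0..} u + g u * ennreal (u powr (-1/2) / 2) * indicator {0..} u \<partial>lborel)"
    by (subst nn_integral_add) auto
  also have "\<dots> = (\<integral>\<^sup>+u. g u * ennreal (indicator {0<..} u * u powr (1/2 - 1)) \<partial>lborel)"
  proof (intro nn_integral_cong_AE eventually_mono[OF AE_lborel_singleton[of 0]])
    fix u :: real assume u: "u \<noteq> 0"
    show "g u * ennreal (u powr (-1/2) / 2) * indicator {0..} u + g u * ennreal (u powr (-1/2) / 2) * indicator {0..} u
        = g u * ennreal (indicator {0<..} u * u powr (1/2 - 1))"
    proof (cases "u > 0")
      case True
      have "ennreal (u powr (-1/2) / 2) + ennreal (u powr (-1/2) / 2) = ennreal (u powr (-1/2))"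
        by (subst ennreal_plus[symmetric]) auto
      then show ?thesis using True by (simp add: distrib_left[symmetric])
    next
      case False
      then show ?thesis using u by (auto simp: indicator_def)
    qed
  qed
  finally show ?thesis .
qed

lemma product_sigma_finite_lborel: "product_sigma_finite (\<lambda>_::'i. lborel :: real measure)"
  unfolding product_sigma_finite_def by (simp add: sigma_finite_lborel)

text \<open>Adding a coordinate convolves with the square of a Lebesgue distributed variable, which
  raises the exponent by \<open>1/2\<close> at the cost of the factor \<open>symmetric_beta\<close>.\<close>

lemma nn_integral_sum_squares_radial:
  fixes J :: "'i set"
  assumes "finite J" "J \<noteq> {}"
  shows "\<exists>K. \<forall>g::real \<Rightarrow> ennreal. g \<in> borel_measurable borel \<longrightarrow>
     (\<integral>\<^sup>+f. g (\<Sum>j\<in>J. (f j)^2) \<partial>PiM J (\<lambda>_. lborel))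
       = K * (\<integral>\<^sup>+u. g u * ennreal (indicator {0<..} u * u powr (real (card J) / 2 - 1)) \<partial>lborel)"
  using assms
proof (induction J rule: finite_ne_induct)
  case (singleton i)
  interpret P: product_sigma_finite "\<lambda>_::'i. lborel :: real measure" by (rule product_sigma_finite_lborel)
  show ?case
  proof (intro exI[of _ 1] allI impI)
    fix g :: "real \<Rightarrow> ennreal" assume g[measurable]: "g \<in> borel_measurable borel"
    have "(\<integral>\<^sup>+f. g (\<Sum>j\<in>{i}. (f j)^2) \<partial>PiM {i} (\<lambda>_. lborel)) = (\<integral>\<^sup>+f. g ((f i)^2) \<partial>PiM {i} (\<lambda>_. lborel))"
      by simp
    also have "\<dots> = (\<integral>\<^sup>+y. g (y^2) \<partial>lborel)"
      by (rule P.product_nn_integral_singleton) measurable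
    also have "\<dots> = (\<integral>\<^sup>+u. g u * ennreal (indicator {0<..} u * u powr (1/2 - 1)) \<partial>lborel)"
      by (rule nn_integral_square_substitution) measurable
    finally show "(\<integral>\<^sup>+f. g (\<Sum>j\<in>{i}. (f j)^2) \<partial>PiM {i} (\<lambda>_. lborel))
       = 1 * (\<integral>\<^sup>+u. g u * ennreal (indicator {0<..} u * u powr (real (card {i}) / 2 - 1)) \<partial>lborel)"
      by simp
  qed
next
  case (insert i J)
  interpret P: product_sigma_finite "\<lambda>_::'i. lborel :: real measure" by (rule product_sigma_finite_lborel)
  obtain K where K: "\<And>g::real \<Rightarrow> ennreal. g \<in> borel_measurable borel \<Longrightarrow>
     (\<integral>\<^sup>+f. g (\<Sum>j\<in>J. (f j)^2) \<partial>PiM J (\<lambda>_. lborel))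
       = K * (\<integral>\<^sup>+u. g u * ennreal (indicator {0<..} u * u powr (real (card J) / 2 - 1)) \<partial>lborel)"
    using insert.IH by blast
  show ?case
  proof (intro exI[of _ "K * symmetric_beta (real (card J) / 2)"] allI impI)
    fix g :: "real \<Rightarrow> ennreal" assume g[measurable]: "g \<in> borel_measurable borel"
    define h where "h = (\<lambda>s. \<integral>\<^sup>+y. g (y^2 + s) \<partial>lborel)"
    have hm[measurable]: "h \<in> borel_measurable borel"
      unfolding h_def by measurable
    have "(\<integral>\<^sup>+f. g (\<Sum>j\<in>insert i J. (f j)^2) \<partial>PiM (insert i J) (\<lambda>_. lborel))
        = (\<integral>\<^sup>+f. (\<integral>\<^sup>+y. g (\<Sum>j\<in>insert i J. ((f(i := y)) j)^2) \<partial>lborel) \<partial>PiM J (\<lambda>_. lborel))"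
      by (rule P.product_nn_integral_insert) (use insert in auto)
    also have "\<dots> = (\<integral>\<^sup>+f. h (\<Sum>j\<in>J. (f j)^2) \<partial>PiM J (\<lambda>_. lborel))"
    proof (rule nn_integral_cong)
      fix f :: "'i \<Rightarrow> real"
      have "(\<Sum>j\<in>insert i J. ((f(i := y)) j)^2) = y^2 + (\<Sum>j\<in>J. (f j)^2)" for y
        using insert by (simp add: sum.insert) (intro sum.cong, auto)
      then show "(\<integral>\<^sup>+y. g (\<Sum>j\<in>insert i J. ((f(i := y)) j)^2) \<partial>lborel) = h (\<Sum>j\<in>J. (f j)^2)"
        by (simp add: h_def)
    qed
    also have "\<dots> = K * (\<integral>\<^sup>+u. h u * ennreal (indicator {0<..} u * u powr (real (card J) / 2 - 1)) \<partial>lborel)"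
      by (rule K) (rule hm)
    also have "(\<integral>\<^sup>+u. h u * ennreal (indicator {0<..} u * u powr (real (card J) / 2 - 1)) \<partial>lborel)
        = symmetric_beta (real (card J) / 2) * (\<integral>\<^sup>+u. g u * ennreal (indicator {0<..} u * u powr (real (card J) / 2 - 1/2)) \<partial>lborel)"
      unfolding h_def by (rule nn_integral_add_square_convolution) (rule g)
    also have "real (card J) / 2 - 1/2 = real (card (insert i J)) / 2 - 1"
      using insert by (simp add: field_simps)
    finally show "(\<integral>\<^sup>+f. g (\<Sum>j\<in>insert i J. (f j)^2) \<partial>PiM (insert i J) (\<lambda>_. lborel))
       = K * symmetric_beta (real (card J) / 2) * (\<integral>\<^sup>+u. g u * ennreal (indicator {0<..} u * u powr (real (card (insert i J)) / 2 - 1)) \<partial>lborel)"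
      by (simp add: mult.assoc)
  qed
qed

lemma nn_integral_exp_half_powr:
  fixes b :: real assumes b: "b > 0"
  shows "(\<integral>\<^sup>+u. ennreal (exp (- u / 2)) * ennreal (indicator {0<..} u * u powr (b - 1)) \<partial>lborel)
       = ennreal (2 powr b * Gamma b)"
proof -
  have "(\<integral>\<^sup>+u. ennreal (exp (- u / 2)) * ennreal (indicator {0<..} u * u powr (b - 1)) \<partial>lborel)
      = ennreal \<bar>2\<bar> * (\<integral>\<^sup>+x. ennreal (exp (- (0 + 2 * x) / 2)) * ennreal (indicator {0<..} (0 + 2 * x) * (0 + 2 * x) powr (b - 1)) \<partial>lborel)"
    by (rule nn_integral_real_affine; simp)
  also have "(\<integral>\<^sup>+x. ennreal (exp (- (0 + 2 * x) / 2)) * ennreal (indicator {0<..} (0 + 2 * x) * (0 + 2 * x) powr (b - 1)) \<partial>lborel)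
      = (\<integral>\<^sup>+x. ennreal (2 powr (b - 1)) * ennreal (indicator {0..} x * x powr (b - 1) / exp x) \<partial>lborel)"
  proof (rule nn_integral_cong)
    fix x :: real
    show "ennreal (exp (- (0 + 2 * x) / 2)) * ennreal (indicator {0<..} (0 + 2 * x) * (0 + 2 * x) powr (b - 1))
        = ennreal (2 powr (b - 1)) * ennreal (indicator {0..} x * x powr (b - 1) / exp x)"
    proof (cases "x > 0")
      case True
      then show ?thesis
        by (simp add: ennreal_mult'[symmetric] powr_mult exp_minus field_simps)
    next
      case False
      then show ?thesis by (cases "x = 0") (auto simp: indicator_def)
    qed
  qed
  also have "\<dots> = ennreal (2 powr (b - 1)) * ennreal (Gamma b)"
    by (subst nn_integral_cmult) (auto simp: Gamma_conv_nn_integral_real[OF b])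
  also have "ennreal \<bar>2\<bar> * (ennreal (2 powr (b - 1)) * ennreal (Gamma b)) = ennreal (2 * (2 powr (b - 1) * Gamma b))"
    using b by (simp add: ennreal_mult'[symmetric] Gamma_real_pos) (simp add: ennreal_mult')
  also have "2 * (2 powr (b - 1) * Gamma b) = 2 powr b * Gamma b"
    by (simp add: powr_diff)
  finally show ?thesis .
qed

lemma nn_integral_exp_neg_square_half: "(\<integral>\<^sup>+y. ennreal (exp (- (y^2) / 2)) \<partial>lborel) = ennreal (sqrt (2 * pi))"
proof -
  have ps: "prob_space (density lborel (\<lambda>x. ennreal (std_normal_density x)))"
    by (rule prob_space_normal_density) simp
  have "emeasure (density lborel (\<lambda>x. ennreal (std_normal_density x))) UNIV = 1"
    using prob_space.emeasure_space_1[OF ps] by simp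
  then have "(\<integral>\<^sup>+y. ennreal (std_normal_density y) * indicator UNIV y \<partial>lborel) = 1"
    by (subst (asm) emeasure_density) auto
  then have "(\<integral>\<^sup>+y. ennreal (std_normal_density y) \<partial>lborel) = 1" by simp
  moreover have "(\<integral>\<^sup>+y. ennreal (std_normal_density y) \<partial>lborel)
      = ennreal (1 / sqrt (2 * pi)) * (\<integral>\<^sup>+y. ennreal (exp (- (y^2) / 2)) \<partial>lborel)"
    by (subst nn_integral_cmult[symmetric]) (auto simp: std_normal_density_def ennreal_mult'[symmetric])
  ultimately have "ennreal (1 / sqrt (2 * pi)) * (\<integral>\<^sup>+y. ennreal (exp (- (y^2) / 2)) \<partial>lborel) = 1" by simp
  then have "ennreal (sqrt (2 * pi)) * (ennreal (1 / sqrt (2 * pi)) * (\<integral>\<^sup>+y. ennreal (exp (- (y^2) / 2)) \<partial>lborel))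
       = ennreal (sqrt (2 * pi))" by simp
  moreover have "ennreal (sqrt (2 * pi)) * ennreal (1 / sqrt (2 * pi)) = 1"
    by (subst ennreal_mult'[symmetric]) auto
  ultimately show ?thesis by (simp add: mult.assoc[symmetric])
qed

lemma nn_integral_exp_sum_squares:
  fixes J :: "'i set"
  assumes J: "finite J"
  shows "(\<integral>\<^sup>+f. ennreal (exp (- (\<Sum>j\<in>J. (f j)\<^sup>2) / 2)) \<partial>PiM J (\<lambda>_. lborel)) = ennreal (sqrt (2 * pi) ^ card J)"
proof -
  interpret P: product_sigma_finite "\<lambda>_::'i. lborel :: real measure"
    by (rule product_sigma_finite_lborel)
  have "ennreal (exp (- (\<Sum>j\<in>J. (f j)\<^sup>2) / 2)) = (\<Prod>j\<in>J. ennreal (exp (- (f j)\<^sup>2 / 2)))" for f :: "'i \<Rightarrow> real"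
    using J by (simp add: prod_ennreal exp_sum sum_negf[symmetric] sum_divide_distrib)
  then have "(\<integral>\<^sup>+f. ennreal (exp (- (\<Sum>j\<in>J. (f j)\<^sup>2) / 2)) \<partial>PiM J (\<lambda>_. lborel))
      = (\<integral>\<^sup>+f. (\<Prod>j\<in>J. ennreal (exp (- (f j)\<^sup>2 / 2))) \<partial>PiM J (\<lambda>_. lborel))"
    by simp
  also have "\<dots> = (\<Prod>j\<in>J. (\<integral>\<^sup>+y. ennreal (exp (- y\<^sup>2 / 2)) \<partial>lborel))"
    using J by (intro P.product_nn_integral_prod) auto
  also have "\<dots> = ennreal (sqrt (2 * pi) ^ card J)"
    by (simp only: nn_integral_exp_neg_square_half prod_constant) (simp add: ennreal_power)
  finally show ?thesis .
qed

text \<open>The constant of the radial formula is identified by testing it against \<open>exp (- u / 2)\<close>;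
  it is the familiar \<open>\<pi>\<^sup>n\<^sup>/\<^sup>2 / \<Gamma>(n/2)\<close>, half the area of the unit sphere.\<close>

lemma nn_integral_sum_squares_polar:
  fixes J :: "'i set" and g :: "real \<Rightarrow> ennreal"
  assumes J: "finite J" "J \<noteq> {}" and g: "g \<in> borel_measurable borel"
  shows "(\<integral>\<^sup>+f. g (\<Sum>j\<in>J. (f j)\<^sup>2) \<partial>PiM J (\<lambda>_. lborel))
       = ennreal (pi powr (card J / 2) / Gamma (card J / 2))
           * (\<integral>\<^sup>+u. g u * ennreal (indicator {0<..} u * u powr (card J / 2 - 1)) \<partial>lborel)"
proof -
  define a where "a = card J / 2"
  have a: "a > 0"
    using J by (simp add: a_def card_gt_0_iff)
  obtain K where K: "\<And>g::real \<Rightarrow> ennreal. g \<in> borel_measurable borel \<Longrightarrow>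
     (\<integral>\<^sup>+f. g (\<Sum>j\<in>J. (f j)\<^sup>2) \<partial>PiM J (\<lambda>_. lborel))
       = K * (\<integral>\<^sup>+u. g u * ennreal (indicator {0<..} u * u powr (a - 1)) \<partial>lborel)"
    using nn_integral_sum_squares_radial[OF J] unfolding a_def by blast
  have c: "2 powr a * Gamma a > 0"
    using a by (simp add: Gamma_real_pos)
  have "K * ennreal (2 powr a * Gamma a) = ennreal (sqrt (2 * pi) ^ card J)"
    using K[of "\<lambda>s. ennreal (exp (- s / 2))"] nn_integral_exp_half_powr[OF a] nn_integral_exp_sum_squares[OF J(1)]
    by simp
  also have "sqrt (2 * pi) ^ card J = pi powr a / Gamma a * (2 powr a * Gamma a)"
    using Gamma_real_pos[OF a] by (simp add: a_def powr_half_sqrt[symmetric] powr_mult power_mult_distrib powr_power)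
  finally have K_eq: "K * ennreal (2 powr a * Gamma a) = ennreal (pi powr a / Gamma a) * ennreal (2 powr a * Gamma a)"
    by (simp only: ennreal_mult''[OF less_imp_le[OF c]])
  have "ennreal (2 powr a * Gamma a) \<noteq> 0" "ennreal (2 powr a * Gamma a) \<noteq> Orderings.top"
    using c Gamma_real_pos[OF a] by simp_all
  note cancel = ennreal_mult_divide_eq[OF this]
  have "K = K * ennreal (2 powr a * Gamma a) / ennreal (2 powr a * Gamma a)"
    by (simp only: cancel)
  also have "\<dots> = ennreal (pi powr a / Gamma a)"
    by (simp only: K_eq cancel)
  finally have "K = ennreal (pi powr a / Gamma a)" .
  with K[OF g] show ?thesis
    by (simp add: a_def)
qed

lemma nn_integral_powr_exp_half:
  fixes b q :: real
  assumes "b > 0" and "q \<ge> 0"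
  shows "(\<integral>\<^sup>+u. ennreal (u powr q * exp (- u / 2)) * ennreal (indicator {0<..} u * u powr (b - 1)) \<partial>lborel)
       = ennreal (2 powr (b + q) * Gamma (b + q))"
proof -
  have "ennreal (u powr q * exp (- u / 2)) * ennreal (indicator {0<..} u * u powr (b - 1))
      = ennreal (exp (- u / 2)) * ennreal (indicator {0<..} u * u powr (b + q - 1))" for u :: real
  proof (cases "u > 0")
    case True
    then have "u powr q * u powr (b - 1) = u powr (b + q - 1)"
      by (simp add: powr_add[symmetric] algebra_simps)
    with True show ?thesis
      by (simp add: ennreal_mult'[symmetric] mult_ac)
  qed simp
  then show ?thesis
    using nn_integral_exp_half_powr[of "b + q"] assms by simp
qed

lemma prod_std_normal_density:
  assumes "finite J"
  shows "(\<Prod>j\<in>J. std_normal_density (f j)) = (1 / sqrt (2 * pi)) ^ card J * exp (- (\<Sum>j\<in>J. (f j)\<^sup>2) / 2)"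
proof -
  have "(\<Prod>j\<in>J. exp (- (f j)\<^sup>2 / 2)) = exp (- (\<Sum>j\<in>J. (f j)\<^sup>2) / 2)"
    using assms by (simp add: exp_sum sum_negf[symmetric] sum_divide_distrib)
  then show ?thesis
    by (simp only: std_normal_density_def prod.distrib prod_constant)
qed

lemma nn_integral_sum_squares_powr_std_normal:
  fixes J :: "'i set" and p :: real
  assumes J: "finite J" "J \<noteq> {}" and p: "p \<ge> 0"
  shows "(\<integral>\<^sup>+f. ennreal ((\<Sum>j\<in>J. (f j)\<^sup>2) powr (p / 2) * (\<Prod>j\<in>J. std_normal_density (f j))) \<partial>PiM J (\<lambda>_. lborel))
       = ennreal (chi_moment (card J) p)"
proof -
  define a where "a = card J / 2"
  have a: "a > 0"
    using J by (simp add: a_def card_gt_0_iff)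
  have "(\<integral>\<^sup>+f. ennreal ((\<Sum>j\<in>J. (f j)\<^sup>2) powr (p / 2) * (\<Prod>j\<in>J. std_normal_density (f j))) \<partial>PiM J (\<lambda>_. lborel))
      = ennreal ((1 / sqrt (2 * pi)) ^ card J)
          * (\<integral>\<^sup>+f. ennreal ((\<Sum>j\<in>J. (f j)\<^sup>2) powr (p / 2) * exp (- (\<Sum>j\<in>J. (f j)\<^sup>2) / 2)) \<partial>PiM J (\<lambda>_. lborel))"
    using J(1) by (simp add: prod_std_normal_density nn_integral_cmult[symmetric] ennreal_mult'[symmetric] mult_ac)
  also have "(\<integral>\<^sup>+f. ennreal ((\<Sum>j\<in>J. (f j)\<^sup>2) powr (p / 2) * exp (- (\<Sum>j\<in>J. (f j)\<^sup>2) / 2)) \<partial>PiM J (\<lambda>_. lborel))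
      = ennreal (pi powr a / Gamma a)
          * (\<integral>\<^sup>+u. ennreal (u powr (p / 2) * exp (- u / 2)) * ennreal (indicator {0<..} u * u powr (a - 1)) \<partial>lborel)"
    unfolding a_def by (rule nn_integral_sum_squares_polar[OF J]) measurable
  also have "\<dots> = ennreal (pi powr a / Gamma a) * ennreal (2 powr (a + p / 2) * Gamma (a + p / 2))"
    using nn_integral_powr_exp_half[OF a, of "p / 2"] p by simp
  also have "ennreal ((1 / sqrt (2 * pi)) ^ card J) * (ennreal (pi powr a / Gamma a) * ennreal (2 powr (a + p / 2) * Gamma (a + p / 2)))
      = ennreal (chi_moment (card J) p)"
  proof -
    have "sqrt (2 * pi) ^ card J = 2 powr a * pi powr a"
      by (simp add: a_def powr_half_sqrt[symmetric] powr_mult power_mult_distrib powr_power)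
    then have "(1 / sqrt (2 * pi)) ^ card J = 1 / (2 powr a * pi powr a)"
      by (simp add: power_one_over)
    moreover have "chi_moment (card J) p = 2 powr (p / 2) * Gamma (a + p / 2) / Gamma a"
      by (simp add: chi_moment_def a_def add_divide_distrib)
    moreover have "Gamma a > 0"
      using a by (rule Gamma_real_pos)
    ultimately have "(1 / sqrt (2 * pi)) ^ card J * (pi powr a / Gamma a * (2 powr (a + p / 2) * Gamma (a + p / 2)))
        = chi_moment (card J) p"
      and nonneg: "0 \<le> (1 / sqrt (2 * pi)) ^ card J" "0 \<le> pi powr a / Gamma a"
      by (simp_all add: powr_add)
    then show ?thesis
      by (simp only: ennreal_mult'[OF nonneg(1), symmetric] ennreal_mult'[OF nonneg(2), symmetric])
  qed
  finally show ?thesis .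
qed

section \<open>The standard Gaussian measure on \<open>\<real>\<^sup>d\<close>\<close>

lemma std_normal_density_nn_integral: "(\<integral>\<^sup>+y. ennreal (std_normal_density y) \<partial>lborel) = 1"
proof -
  have "prob_space (density lborel (\<lambda>x. ennreal (std_normal_density x)))"
    by (rule prob_space_normal_density) simp
  then have "emeasure (density lborel (\<lambda>x. ennreal (std_normal_density x))) UNIV = 1"
    using prob_space.emeasure_space_1 by force
  then show ?thesis
    by (simp add: emeasure_density)
qed

lemma borel_measurable_std_gaussian_density [measurable]:
  "std_gaussian_density \<in> borel_measurable borel"
  unfolding std_gaussian_density_def[abs_def] normal_density_def
  by (intro borel_measurable_continuous_onI continuous_intros) auto

lemma std_gaussian_density_nonneg: "std_gaussian_density x \<ge> 0"
  unfolding std_gaussian_density_def by (intro prod_nonneg) simp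

lemma std_gaussian_density_Basis:
  fixes x :: "real^'d"
  shows "std_gaussian_density x = (\<Prod>b\<in>Basis. std_normal_density (x \<bullet> b))"
proof -
  have inj: "inj (\<lambda>i::'d. axis i (1::real))"
    by (auto simp: inj_on_def axis_eq_axis)
  have Basis: "(Basis :: (real^'d) set) = range (\<lambda>i. axis i 1)"
    by (auto simp: Basis_vec_def)
  show ?thesis
    unfolding std_gaussian_density_def Basis by (subst prod.reindex[OF inj]) (simp add: cart_eq_inner_axis)
qed

lemma std_gaussian_density_norm:
  fixes x :: "real^'d"
  shows "std_gaussian_density x = (1 / sqrt (2 * pi)) ^ CARD('d) * exp (- (norm x)\<^sup>2 / 2)"
proof -
  have "std_gaussian_density x = (\<Prod>b\<in>Basis. 1 / sqrt (2 * pi) * exp (- (x \<bullet> b)\<^sup>2 / 2))"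
    by (simp only: std_gaussian_density_Basis std_normal_density_def)
  also have "\<dots> = (1 / sqrt (2 * pi)) ^ CARD('d) * (\<Prod>b\<in>Basis. exp (- (x \<bullet> b)\<^sup>2 / 2))"
    by (simp only: prod.distrib prod_constant) simp
  also have "(norm x)\<^sup>2 = (\<Sum>b\<in>Basis. (x \<bullet> b)\<^sup>2)"
    unfolding power2_norm_eq_inner by (subst euclidean_inner) (simp add: power2_eq_square)
  then have "(\<Prod>b\<in>Basis. exp (- (x \<bullet> b)\<^sup>2 / 2)) = exp (- (norm x)\<^sup>2 / 2)"
    by (simp add: exp_sum sum_negf[symmetric] sum_divide_distrib)
  finally show ?thesis .
qed

lemma nn_integral_sum_squares_Basis_std_gaussian:
  fixes B :: "(real^'d) set" and p :: real
  assumes B: "B \<subseteq> Basis" "B \<noteq> {}" and p: "p \<ge> 0"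
  shows "(\<integral>\<^sup>+x. ennreal ((\<Sum>b\<in>B. (x \<bullet> b)\<^sup>2) powr (p / 2) * std_gaussian_density x) \<partial>lborel)
       = ennreal (chi_moment (card B) p)"
proof -
  interpret P: product_sigma_finite "\<lambda>_::real^'d. lborel :: real measure"
    by (rule product_sigma_finite_lborel)
  define C where "C = Basis - B"
  have BC: "Basis = B \<union> C" "B \<inter> C = {}" and fin: "finite B" "finite C"
    using B by (auto simp: C_def intro: finite_subset)
  define A where "A = (\<lambda>f::real^'d \<Rightarrow> real. ennreal ((\<Sum>b\<in>B. (f b)\<^sup>2) powr (p / 2) * (\<Prod>b\<in>B. std_normal_density (f b))))"
  define Q where "Q = (\<lambda>f::real^'d \<Rightarrow> real. A f * (\<Prod>b\<in>C. ennreal (std_normal_density (f b))))"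
  have A_meas[measurable]: "A \<in> borel_measurable (PiM B (\<lambda>_. lborel))"
    unfolding A_def by measurable
  have "b \<in> B \<Longrightarrow> b \<in> Basis" "b \<in> C \<Longrightarrow> b \<in> Basis" for b
    using BC(1) by auto
  then have Q_meas: "Q \<in> borel_measurable (PiM Basis (\<lambda>_. lborel))"
    unfolding Q_def A_def by measurable
  have "(\<integral>\<^sup>+x. ennreal ((\<Sum>b\<in>B. (x \<bullet> b)\<^sup>2) powr (p / 2) * std_gaussian_density x) \<partial>lborel)
      = (\<integral>\<^sup>+f. Q f \<partial>PiM Basis (\<lambda>_. lborel))"
  proof -
    have "(\<Prod>b\<in>Basis. std_normal_density (f b)) = (\<Prod>b\<in>B. std_normal_density (f b)) * (\<Prod>b\<in>C. std_normal_density (f b))"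
      for f :: "real^'d \<Rightarrow> real"
      unfolding BC(1) using fin BC(2) by (rule prod.union_disjoint)
    moreover have "(\<Sum>b\<in>B. ((\<Sum>b'\<in>Basis. f b' *\<^sub>R b') \<bullet> b)\<^sup>2) = (\<Sum>b\<in>B. (f b)\<^sup>2)" for f
      using B(1) by (intro sum.cong) (auto simp: inner_sum_Basis_scaleR)
    ultimately show ?thesis
      by (subst lborel_eq, subst nn_integral_distr)
         (auto simp: Q_def A_def std_gaussian_density_Basis inner_sum_Basis_scaleR ennreal_mult'' prod_ennreal
           prod_nonneg mult.assoc intro!: nn_integral_cong)
  qed
  also have "\<dots> = (\<integral>\<^sup>+x. (\<integral>\<^sup>+y. Q (merge B C (x, y)) \<partial>PiM C (\<lambda>_. lborel)) \<partial>PiM B (\<lambda>_. lborel))"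
    unfolding BC(1) using Q_meas BC fin by (intro P.product_nn_integral_fold) auto
  also have "\<dots> = (\<integral>\<^sup>+x. A x * (\<integral>\<^sup>+y. (\<Prod>b\<in>C. ennreal (std_normal_density (y b))) \<partial>PiM C (\<lambda>_. lborel)) \<partial>PiM B (\<lambda>_. lborel))"
  proof (intro nn_integral_cong)
    fix x :: "real^'d \<Rightarrow> real"
    have "Q (merge B C (x, y)) = A x * (\<Prod>b\<in>C. ennreal (std_normal_density (y b)))" for y
      using BC(2) unfolding Q_def A_def merge_def
      by (auto intro!: arg_cong2[where f = "(*)"] arg_cong[where f = ennreal] sum.cong prod.cong)
    then show "(\<integral>\<^sup>+y. Q (merge B C (x, y)) \<partial>PiM C (\<lambda>_. lborel))
        = A x * (\<integral>\<^sup>+y. (\<Prod>b\<in>C. ennreal (std_normal_density (y b))) \<partial>PiM C (\<lambda>_. lborel))"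
      by (simp add: nn_integral_cmult)
  qed
  also have "\<dots> = (\<integral>\<^sup>+x. A x \<partial>PiM B (\<lambda>_. lborel))"
    using fin(2) by (subst P.product_nn_integral_prod) (auto simp: std_normal_density_nn_integral)
  also have "\<dots> = ennreal (chi_moment (card B) p)"
    unfolding A_def by (rule nn_integral_sum_squares_powr_std_normal[OF fin(1) B(2) p])
  finally show ?thesis .
qed

lemma nn_integral_std_gaussian_orthogonal_transformation:
  fixes f :: "real^'d \<Rightarrow> real^'d" and F :: "real^'d \<Rightarrow> ennreal"
  assumes f: "orthogonal_transformation f" and F[measurable]: "F \<in> borel_measurable borel"
  shows "(\<integral>\<^sup>+x. F (f x) * std_gaussian_density x \<partial>lborel) = (\<integral>\<^sup>+x. F x * std_gaussian_density x \<partial>lborel)"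
proof -
  have [measurable]: "f \<in> borel_measurable borel"
    using f by (simp add: borel_measurable_linear orthogonal_transformation_linear)
  have "std_gaussian_density (f x) = std_gaussian_density x" for x
    using f by (simp only: std_gaussian_density_norm orthogonal_transformation_norm)
  then have "(\<integral>\<^sup>+x. F (f x) * std_gaussian_density x \<partial>lborel)
      = (\<integral>\<^sup>+y. F y * std_gaussian_density y \<partial>distr lborel borel f)"
    by (subst nn_integral_distr) auto
  then show ?thesis
    by (simp add: lborel_distr_orthogonal_transformation[OF f])
qed

definition coord_proj :: "'a::euclidean_space set \<Rightarrow> 'a \<Rightarrow> 'a" where
  "coord_proj S x = (\<Sum>b\<in>S. (x \<bullet> b) *\<^sub>R b)"

lemma linear_coord_proj: "linear (coord_proj S)"
  unfolding coord_proj_def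
  by (rule linearI) (simp_all add: inner_add_left scaleR_add_left sum.distrib scaleR_sum_right)

lemma coord_proj_in_span: "coord_proj S x \<in> span S"
  unfolding coord_proj_def by (intro span_sum span_scale span_base)

lemma inner_coord_proj:
  assumes S: "S \<subseteq> Basis"
  shows "coord_proj S x \<bullet> coord_proj S y = (\<Sum>b\<in>S. (x \<bullet> b) * (y \<bullet> b))"
proof -
  have "coord_proj S x \<bullet> b = x \<bullet> b" if "b \<in> S" for b
    using S that finite_subset[OF S]
    by (simp add: coord_proj_def inner_sum_left inner_Basis subset_iff if_distrib[of "(*) _"] cong: if_cong)
  then show ?thesis
    by (simp add: coord_proj_def[of S y] inner_sum_right mult.commute)
qed

lemma coord_proj_add_Diff:
  assumes B: "B \<subseteq> Basis"
  shows "coord_proj B x + coord_proj (Basis - B) x = x"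
    and "coord_proj B x \<bullet> coord_proj B x + coord_proj (Basis - B) x \<bullet> coord_proj (Basis - B) x = x \<bullet> x"
proof -
  have split: "(\<Sum>b\<in>Basis. h b) = (\<Sum>b\<in>B. h b) + (\<Sum>b\<in>Basis - B. h b)" for h :: "'a \<Rightarrow> 'b::comm_monoid_add"
    using B by (metis finite_Basis sum.subset_diff add.commute)
  show "coord_proj B x + coord_proj (Basis - B) x = x"
    using split[of "\<lambda>b. (x \<bullet> b) *\<^sub>R b"] by (simp add: coord_proj_def euclidean_representation)
  show "coord_proj B x \<bullet> coord_proj B x + coord_proj (Basis - B) x \<bullet> coord_proj (Basis - B) x = x \<bullet> x"
    using split[of "\<lambda>b. (x \<bullet> b) * (x \<bullet> b)"] B by (simp add: inner_coord_proj euclidean_inner[of x x])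
qed

lemma isometries_coordinates_orthogonal_comp:
  fixes V B :: "'a::euclidean_space set"
  assumes V: "subspace V" and B: "B \<subseteq> Basis" and card: "card B + dim V = DIM('a)"
  obtains f g where "linear f" "f \<in> span B \<rightarrow> orthogonal_comp V" "\<And>x. x \<in> span B \<Longrightarrow> norm (f x) = norm x"
    and "linear g" "g \<in> span (Basis - B) \<rightarrow> V" "\<And>x. x \<in> span (Basis - B) \<Longrightarrow> norm (g x) = norm x"
proof -
  have dim_span_Basis: "dim (span S) = card S" if "S \<subseteq> Basis" for S :: "'a set"
    using that by (simp add: independent_mono[OF independent_Basis] dim_eq_card_independent)
  have "dim (orthogonal_comp V) + dim V = DIM('a)"
    using dim_subspace_orthogonal_to_vectors[OF V subspace_UNIV subset_UNIV]
    by (simp add: orthogonal_comp_def)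
  moreover have "card (Basis - B) = dim V"
    using card B by (simp add: card_Diff_subset finite_subset)
  ultimately have dimB: "dim (span B) \<le> dim (orthogonal_comp V)" and dimC: "dim (span (Basis - B)) \<le> dim V"
    using card dim_span_Basis[OF B] dim_span_Basis[of "Basis - B"] by auto
  obtain f where f: "linear f" "f \<in> span B \<rightarrow> orthogonal_comp V" "\<And>x. x \<in> span B \<Longrightarrow> norm (f x) = norm x"
    using isometry_subset_subspace[OF subspace_span subspace_orthogonal_comp dimB] by blast
  obtain g where g: "linear g" "g \<in> span (Basis - B) \<rightarrow> V" "\<And>x. x \<in> span (Basis - B) \<Longrightarrow> norm (g x) = norm x"
    using isometry_subset_subspace[OF subspace_span V dimC] by blast
  show thesis
    using f g by (rule that)
qed

lemma orthogonal_transformation_onto_orthogonal_comp: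
  fixes V B :: "'a::euclidean_space set"
  assumes V: "subspace V" and B: "B \<subseteq> Basis" and card: "card B + dim V = DIM('a)"
  obtains T where "orthogonal_transformation T"
    and "\<And>x. \<exists>w. (\<forall>v\<in>V. w \<bullet> v = 0) \<and> T x - w \<in> V \<and> w \<bullet> w = (\<Sum>b\<in>B. (x \<bullet> b)\<^sup>2)"
proof -
  let ?P = "coord_proj B" and ?Q = "coord_proj (Basis - B)"
  obtain f g where f: "linear f" "f \<in> span B \<rightarrow> orthogonal_comp V" "\<And>x. x \<in> span B \<Longrightarrow> norm (f x) = norm x"
    and g: "linear g" "g \<in> span (Basis - B) \<rightarrow> V" "\<And>x. x \<in> span (Basis - B) \<Longrightarrow> norm (g x) = norm x"
    using isometries_coordinates_orthogonal_comp[OF assms] by blast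
  have fW: "f (?P x) \<bullet> v = 0" if "v \<in> V" for x v
    using funcset_mem[OF f(2) coord_proj_in_span] that
    by (simp add: orthogonal_comp_def real_inner_class.orthogonal_def inner_commute)
  have gV: "g (?Q x) \<in> V" for x
    using g(2) coord_proj_in_span by (rule funcset_mem)
  define T where "T x = f (?P x) + g (?Q x)" for x
  have "linear T"
    using linear_compose[OF linear_coord_proj f(1)] linear_compose[OF linear_coord_proj g(1)]
    unfolding T_def[abs_def] by (simp add: o_def linear_compose_add)
  moreover have "T x \<bullet> T x = x \<bullet> x" for x
  proof -
    have "T x \<bullet> T x = f (?P x) \<bullet> f (?P x) + g (?Q x) \<bullet> g (?Q x)"
      using fW[OF gV, of x x] by (simp add: T_def inner_add_left inner_add_right inner_commute)
    also have "\<dots> = ?P x \<bullet> ?P x + ?Q x \<bullet> ?Q x"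
      using f(3)[OF coord_proj_in_span] g(3)[OF coord_proj_in_span] by (simp add: dot_square_norm)
    finally show ?thesis
      using coord_proj_add_Diff(2)[OF B] by simp
  qed
  ultimately have "orthogonal_transformation T"
    by (simp add: orthogonal_transformation norm_eq_sqrt_inner)
  moreover have "\<exists>w. (\<forall>v\<in>V. w \<bullet> v = 0) \<and> T x - w \<in> V \<and> w \<bullet> w = (\<Sum>b\<in>B. (x \<bullet> b)\<^sup>2)" for x
  proof (intro exI conjI)
    show "\<forall>v\<in>V. f (?P x) \<bullet> v = 0" "T x - f (?P x) \<in> V"
      using fW gV by (simp_all add: T_def)
    show "f (?P x) \<bullet> f (?P x) = (\<Sum>b\<in>B. (x \<bullet> b)\<^sup>2)"
    proof -
      have "f (?P x) \<bullet> f (?P x) = ?P x \<bullet> ?P x"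
        using f(3)[OF coord_proj_in_span] by (simp add: dot_square_norm)
      then show ?thesis
        using B by (simp add: inner_coord_proj power2_eq_square)
    qed
  qed
  ultimately show thesis
    by (rule that)
qed

lemma nn_integral_gram_det_case_nat_std_gaussian:
  fixes y :: "nat \<Rightarrow> real^'d" and p :: real
  assumes l: "l < CARD('d)" and p: "p \<ge> 0"
  shows "(\<integral>\<^sup>+t. ennreal (gram_det (Suc l) (case_nat t y) powr (p / 2)) * std_gaussian_density t \<partial>lborel)
       = ennreal (chi_moment (CARD('d) - l) p * gram_det l y powr (p / 2))"
proof (cases "gram_det l y = 0")
  case True
  have "gram_det (Suc l) (case_nat t y) = 0" for t
  proof -
    obtain w :: "real^'d" where "gram_det (Suc l) (case_nat t y) = (w \<bullet> w) * gram_det l y"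
      using gram_det_case_nat_decomp[of t y l] by blast
    with True show ?thesis
      by simp
  qed
  with True show ?thesis
    by simp
next
  case False
  then have pos: "gram_det l y > 0"
    using gram_det_nonneg[of l y] by linarith
  let ?V = "span (y ` {..<l})"
  have "dim ?V = l"
    using gram_det_pos_imp_dim[OF pos] by (simp add: dim_span)
  moreover have "card (Basis :: (real^'d) set) = CARD('d)"
    by simp
  then obtain B :: "(real^'d) set" where B: "B \<subseteq> Basis" "card B = CARD('d) - l"
    using obtain_subset_with_card_n[of "CARD('d) - l" "Basis :: (real^'d) set"] by auto
  ultimately obtain T where T: "orthogonal_transformation T"
    and w: "\<And>x. \<exists>w. (\<forall>v\<in>?V. w \<bullet> v = 0) \<and> T x - w \<in> ?V \<and> w \<bullet> w = (\<Sum>b\<in>B. (x \<bullet> b)\<^sup>2)"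
    using orthogonal_transformation_onto_orthogonal_comp[of ?V B] l by auto
  have gram_T: "gram_det (Suc l) (case_nat (T x) y) = (\<Sum>b\<in>B. (x \<bullet> b)\<^sup>2) * gram_det l y" for x
  proof -
    obtain w where w1: "\<forall>v\<in>?V. w \<bullet> v = 0" and w2: "T x - w \<in> ?V" and w3: "w \<bullet> w = (\<Sum>b\<in>B. (x \<bullet> b)\<^sup>2)"
      using w[of x] by blast
    have "w \<bullet> y i = 0" if "i < l" for i
      using w1 that by (simp add: span_base)
    then show ?thesis
      using gram_det_case_nat[OF w2] w3 by simp
  qed
  have [measurable]: "(\<lambda>t. gram_det (Suc l) (case_nat t y)) \<in> borel_measurable borel"
    by (rule borel_measurable_gram_det) (simp split: nat.split)
  have "(\<integral>\<^sup>+t. ennreal (gram_det (Suc l) (case_nat t y) powr (p / 2)) * std_gaussian_density t \<partial>lborel)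
      = (\<integral>\<^sup>+x. ennreal (gram_det (Suc l) (case_nat (T x) y) powr (p / 2)) * std_gaussian_density x \<partial>lborel)"
    by (rule nn_integral_std_gaussian_orthogonal_transformation[OF T, symmetric]) measurable
  also have "\<dots> = (\<integral>\<^sup>+x. ennreal (gram_det l y powr (p / 2))
      * ennreal ((\<Sum>b\<in>B. (x \<bullet> b)\<^sup>2) powr (p / 2) * std_gaussian_density x) \<partial>lborel)"
    using pos by (intro nn_integral_cong)
      (simp add: gram_T powr_mult ennreal_mult'' std_gaussian_density_nonneg mult_ac)
  also have "\<dots> = ennreal (gram_det l y powr (p / 2)) * ennreal (chi_moment (CARD('d) - l) p)"
  proof -
    have "B \<noteq> {}"
      using B l by auto
    then show ?thesis
      using B p by (simp add: nn_integral_cmult nn_integral_sum_squares_Basis_std_gaussian)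
  qed
  finally show ?thesis
    by (simp add: ennreal_mult'' mult.commute)
qed

definition std_gaussian :: "(real^'d) measure" where
  "std_gaussian = density lborel (\<lambda>x. ennreal (std_gaussian_density x))"

lemma sets_std_gaussian [measurable_cong, simp]: "sets std_gaussian = sets borel"
  by (simp add: std_gaussian_def)

lemma prob_space_std_gaussian: "prob_space (std_gaussian :: (real^'d) measure)"
proof
  have "emeasure (std_gaussian :: (real^'d) measure) (space std_gaussian)
      = (\<integral>\<^sup>+x. (\<Prod>b\<in>Basis. ennreal (std_normal_density ((x :: real^'d) \<bullet> b))) \<partial>lborel)"
    by (simp add: std_gaussian_def emeasure_density std_gaussian_density_Basis prod_ennreal)
  also have "\<dots> = 1"
    by (subst nn_integral_lborel_prod) (simp_all add: std_normal_density_nn_integral)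
  finally show "emeasure (std_gaussian :: (real^'d) measure) (space std_gaussian) = 1" .
qed

lemma product_sigma_finite_std_gaussian: "product_sigma_finite (\<lambda>_. std_gaussian :: (real^'d) measure)"
  unfolding product_sigma_finite_def
  using prob_space_imp_sigma_finite[OF prob_space_std_gaussian] by simp

lemma nn_integral_std_gaussian:
  fixes F :: "real^'d \<Rightarrow> ennreal"
  shows "F \<in> borel_measurable borel \<Longrightarrow>
    (\<integral>\<^sup>+t. F t \<partial>std_gaussian) = (\<integral>\<^sup>+t. F t * std_gaussian_density t \<partial>lborel)"
  by (simp add: std_gaussian_def nn_integral_density mult.commute)

lemma borel_measurable_gram_det_append_powr:
  fixes z :: "nat \<Rightarrow> real^'d"
  shows "(\<lambda>x. ennreal (gram_det n (\<lambda>a. if a < m then x a else z (a - m)) powr q))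
      \<in> borel_measurable (PiM {..<m} (\<lambda>_. std_gaussian :: (real^'d) measure))"
proof -
  have "(\<lambda>x. if a < m then x a else z (a - m)) \<in> borel_measurable (PiM {..<m} (\<lambda>_. std_gaussian :: (real^'d) measure))"
    for a
  proof (cases "a < m")
    case True
    then show ?thesis
      using measurable_component_singleton[of a "{..<m}" "\<lambda>_. std_gaussian :: (real^'d) measure"]
      by (simp cong: measurable_cong_sets)
  qed simp
  then have "(\<lambda>x. gram_det n (\<lambda>a. if a < m then x a else z (a - m)))
      \<in> borel_measurable (PiM {..<m} (\<lambda>_. std_gaussian :: (real^'d) measure))"
    by (intro borel_measurable_gram_det)
  then show ?thesis
    by measurable
qed

text \<open>Given the vectors after it, a
  Gaussian vector enters only through its distance to their span, a chi variable whose number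
  of degrees of freedom is \<open>d\<close> minus their number.\<close>

lemma nn_integral_gram_det_std_gaussians:
  fixes y :: "nat \<Rightarrow> real^'d" and p :: real
  assumes "k + l \<le> CARD('d)" and p: "p \<ge> 0"
  shows "(\<integral>\<^sup>+x. ennreal (gram_det (k + l) (\<lambda>a. if a < k then x a else y (a - k)) powr (p / 2))
            \<partial>PiM {..<k} (\<lambda>_. std_gaussian))
       = ennreal ((\<Prod>i\<in>{CARD('d) - l - k + 1..CARD('d) - l}. chi_moment i p) * gram_det l y powr (p / 2))"
  using assms(1)
proof (induction k arbitrary: l y)
  case 0
  then show ?case
    by (simp add: space_PiM_empty cong: if_cong)
next
  case (Suc k)
  interpret P: product_sigma_finite "\<lambda>_. std_gaussian :: (real^'d) measure"
    by (rule product_sigma_finite_std_gaussian)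
  let ?d = "CARD('d)"
  define c where "c = (\<Prod>i\<in>{?d - Suc l - k + 1..?d - Suc l}. chi_moment i p)"
  have c: "c \<ge> 0"
    unfolding c_def using p by (intro prod_nonneg chi_moment_nonneg) auto
  have split: "(\<lambda>a. if a < Suc k then (x(k := t)) a else y (a - Suc k))
      = (\<lambda>a. if a < k then x a else case_nat t y (a - k))" for x :: "nat \<Rightarrow> real^'d" and t
    by (auto simp: fun_eq_iff split: nat.split intro!: arg_cong[where f = y])
  have [measurable]: "(\<lambda>t. gram_det (Suc l) (case_nat t y)) \<in> borel_measurable borel"
    by (rule borel_measurable_gram_det) (simp split: nat.split)
  have "(\<integral>\<^sup>+x. ennreal (gram_det (Suc k + l) (\<lambda>a. if a < Suc k then x a else y (a - Suc k)) powr (p / 2))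
          \<partial>PiM {..<Suc k} (\<lambda>_. std_gaussian))
      = (\<integral>\<^sup>+t. (\<integral>\<^sup>+x. ennreal (gram_det (Suc k + l) (\<lambda>a. if a < Suc k then (x(k := t)) a else y (a - Suc k)) powr (p / 2))
          \<partial>PiM {..<k} (\<lambda>_. std_gaussian)) \<partial>std_gaussian)"
    unfolding lessThan_Suc
    by (rule P.product_nn_integral_insert_rev)
      (auto simp: borel_measurable_gram_det_append_powr[of _ "Suc k", unfolded lessThan_Suc])
  also have "\<dots> = (\<integral>\<^sup>+t. ennreal c * ennreal (gram_det (Suc l) (case_nat t y) powr (p / 2)) \<partial>std_gaussian)"
  proof (rule nn_integral_cong)
    fix t :: "real^'d"
    have "(\<integral>\<^sup>+x. ennreal (gram_det (Suc k + l) (\<lambda>a. if a < Suc k then (x(k := t)) a else y (a - Suc k)) powr (p / 2))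
          \<partial>PiM {..<k} (\<lambda>_. std_gaussian))
        = (\<integral>\<^sup>+x. ennreal (gram_det (k + Suc l) (\<lambda>a. if a < k then x a else case_nat t y (a - k)) powr (p / 2))
          \<partial>PiM {..<k} (\<lambda>_. std_gaussian))"
      unfolding split by simp
    also have "\<dots> = ennreal (c * gram_det (Suc l) (case_nat t y) powr (p / 2))"
      unfolding c_def using Suc.prems by (intro Suc.IH) simp
    finally show "(\<integral>\<^sup>+x. ennreal (gram_det (Suc k + l) (\<lambda>a. if a < Suc k then (x(k := t)) a else y (a - Suc k)) powr (p / 2))
          \<partial>PiM {..<k} (\<lambda>_. std_gaussian)) = ennreal c * ennreal (gram_det (Suc l) (case_nat t y) powr (p / 2))"
      by (simp add: ennreal_mult'')
  qed
  also have "\<dots> = ennreal c * (\<integral>\<^sup>+t. ennreal (gram_det (Suc l) (case_nat t y) powr (p / 2)) * std_gaussian_density t \<partial>lborel)"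
    by (simp add: nn_integral_cmult nn_integral_std_gaussian)
  also have "\<dots> = ennreal (c * chi_moment (?d - l) p * gram_det l y powr (p / 2))"
  proof -
    have "chi_moment (?d - l) p \<ge> 0"
      using Suc.prems p by (intro chi_moment_nonneg) auto
    then show ?thesis
      using Suc.prems p c by (simp add: nn_integral_gram_det_case_nat_std_gaussian ennreal_mult' mult.assoc)
  qed
  also have "c * chi_moment (?d - l) p = (\<Prod>i\<in>{?d - l - Suc k + 1..?d - l}. chi_moment i p)"
  proof -
    have R: "{?d - l - Suc k + 1..?d - l} = insert (?d - l) {?d - Suc l - k + 1..?d - Suc l}"
      using Suc.prems by auto
    show ?thesis
      unfolding R c_def using Suc.prems by (subst prod.insert) (auto simp: mult.commute)
  qed
  finally show ?case
    by simp
qed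

lemma distr_restrict_indep_std_gaussian:
  fixes X :: "nat \<Rightarrow> 'w \<Rightarrow> real^'d" and M :: "'w measure"
  assumes M: "prob_space M"
    and X: "\<And>i. i < k \<Longrightarrow> distributed M lborel (X i) (\<lambda>x. ennreal (std_gaussian_density x))"
    and indep: "prob_space.indep_vars M (\<lambda>_. borel) X {..<k}"
  shows "distr M (PiM {..<k} (\<lambda>_. borel)) (\<lambda>\<omega>. restrict (\<lambda>i. X i \<omega>) {..<k}) = PiM {..<k} (\<lambda>_. std_gaussian)"
proof (cases "k = 0")
  case True
  interpret M: prob_space M by fact
  let ?X = "\<lambda>\<omega>. restrict (\<lambda>i. X i \<omega>) {..<k}"
  show ?thesis
  proof (rule measure_eqI)
    fix A
    assume "A \<in> sets (distr M (PiM {..<k} (\<lambda>_. borel)) ?X)"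
    then have "A = {} \<or> A = {\<lambda>_. undefined}"
      using True by (simp add: sets_PiM_empty)
    moreover have "?X \<in> measurable M (PiM {..<k} (\<lambda>_. borel :: (real^'d) measure))"
      using True by (simp add: measurable_def space_PiM_empty sets_PiM_empty restrict_def Pi_iff vimage_def)
    moreover have "?X -` {\<lambda>_. undefined} \<inter> space M = space M"
      using True by auto
    ultimately show "emeasure (distr M (PiM {..<k} (\<lambda>_. borel)) ?X) A = emeasure (PiM {..<k} (\<lambda>_. std_gaussian)) A"
      using True by (auto simp: emeasure_distr sets_PiM_empty M.emeasure_space_1)
  qed (simp add: True sets_PiM_empty)
next
  case False
  interpret M: prob_space M by fact
  have "distr M borel (X i) = std_gaussian" if "i < k" for i
  proof -
    have "distr M lborel (X i) = density lborel (\<lambda>x. ennreal (std_gaussian_density x))"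
      using X[OF that] by (simp add: distributed_def)
    moreover have "distr M borel (X i) = distr M lborel (X i)"
      by (rule distr_cong) auto
    ultimately show ?thesis
      by (simp add: std_gaussian_def)
  qed
  moreover have "X i \<in> borel_measurable M" if "i < k" for i
    using X[OF that] by (auto simp: distributed_def cong: measurable_cong_sets)
  ultimately have "distr M (PiM {..<k} (\<lambda>_. borel)) (\<lambda>\<omega>. restrict (\<lambda>i. X i \<omega>) {..<k})
      = PiM {..<k} (\<lambda>i. distr M borel (X i))"
    using M.indep_vars_iff_distr_eq_PiM'[of "{..<k}" X "\<lambda>_. borel"] False indep by auto
  also have "\<dots> = PiM {..<k} (\<lambda>_. std_gaussian)"
    using \<open>\<And>i. i < k \<Longrightarrow> distr M borel (X i) = std_gaussian\<close> by (intro PiM_cong) auto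
  finally show ?thesis .
qed

lemma (in prob_space) nn_integral_indep_var:
  assumes indep: "indep_var S X T Y" and H: "H \<in> borel_measurable (S \<Otimes>\<^sub>M T)"
  shows "(\<integral>\<^sup>+\<omega>. H (X \<omega>, Y \<omega>) \<partial>M) = (\<integral>\<^sup>+y. (\<integral>\<^sup>+x. H (x, y) \<partial>distr M S X) \<partial>distr M T Y)"
proof -
  have X: "X \<in> measurable M S" and Y: "Y \<in> measurable M T"
    and joint: "distr M S X \<Otimes>\<^sub>M distr M T Y = distr M (S \<Otimes>\<^sub>M T) (\<lambda>\<omega>. (X \<omega>, Y \<omega>))"
    using indep_var_distribution_eq indep by auto
  interpret PXY: pair_sigma_finite "distr M S X" "distr M T Y"
    using X Y by (intro pair_sigma_finite.intro prob_space_imp_sigma_finite prob_space_distr)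
  have "(\<integral>\<^sup>+\<omega>. H (X \<omega>, Y \<omega>) \<partial>M) = (\<integral>\<^sup>+z. H z \<partial>(distr M S X \<Otimes>\<^sub>M distr M T Y))"
    using X Y H by (simp add: joint nn_integral_distr)
  also have "\<dots> = (\<integral>\<^sup>+y. (\<integral>\<^sup>+x. H (x, y) \<partial>distr M S X) \<partial>distr M T Y)"
    using H by (intro PXY.nn_integral_snd[symmetric]) (simp cong: measurable_cong_sets)
  finally show ?thesis .
qed

lemma nn_integral_gram_det_indep_std_gaussians:
  fixes M :: "'w measure" and X Y :: "nat \<Rightarrow> 'w \<Rightarrow> real^'d" and p :: real
  assumes M: "prob_space M" and kl: "k + l \<le> CARD('d)"
    and X: "\<And>i. i < k \<Longrightarrow> distributed M lborel (X i) (\<lambda>x. ennreal (std_gaussian_density x))"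
    and indep_X: "prob_space.indep_vars M (\<lambda>_. borel) X {..<k}"
    and indep_XY: "prob_space.indep_var M
           (PiM {..<k} (\<lambda>_. borel)) (\<lambda>\<omega>. restrict (\<lambda>i. X i \<omega>) {..<k})
           (PiM {..<l} (\<lambda>_. borel)) (\<lambda>\<omega>. restrict (\<lambda>j. Y j \<omega>) {..<l})"
    and p: "p \<ge> 0"
  shows "(\<integral>\<^sup>+\<omega>. ennreal (gram_det (k + l) (\<lambda>a. if a < k then X a \<omega> else Y (a - k) \<omega>) powr (p / 2)) \<partial>M)
       = ennreal (\<Prod>i\<in>{CARD('d) - l - k + 1..CARD('d) - l}. chi_moment i p)
           * (\<integral>\<^sup>+\<omega>. ennreal (gram_det l (\<lambda>a. Y a \<omega>) powr (p / 2)) \<partial>M)"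
proof -
  interpret M: prob_space M by fact
  let ?S = "PiM {..<k} (\<lambda>_. borel :: (real^'d) measure)" and ?T = "PiM {..<l} (\<lambda>_. borel :: (real^'d) measure)"
  let ?Y = "\<lambda>\<omega>. restrict (\<lambda>j. Y j \<omega>) {..<l}"
  define c where "c = (\<Prod>i\<in>{CARD('d) - l - k + 1..CARD('d) - l}. chi_moment i p)"
  define H where "H z = ennreal (gram_det (k + l) (\<lambda>a. if a < k then fst z a else snd z (a - k)) powr (p / 2))"
    for z :: "(nat \<Rightarrow> real^'d) \<times> (nat \<Rightarrow> real^'d)"
  have "(\<lambda>z. if a < k then fst z a else snd z (a - k)) \<in> borel_measurable (?S \<Otimes>\<^sub>M ?T)"
    if "a < k + l" for a
    using that by (cases "a < k") (auto intro: measurable_compose[OF measurable_fst measurable_component_singleton]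
        measurable_compose[OF measurable_snd measurable_component_singleton])
  then have "(\<lambda>z. gram_det (k + l) (\<lambda>a. if a < k then fst z a else snd z (a - k))) \<in> borel_measurable (?S \<Otimes>\<^sub>M ?T)"
    by (rule borel_measurable_gram_det)
  then have H_meas: "H \<in> borel_measurable (?S \<Otimes>\<^sub>M ?T)"
    unfolding H_def by measurable
  have "(\<lambda>y. gram_det l y) \<in> borel_measurable ?T"
    by (rule borel_measurable_gram_det) (simp add: measurable_component_singleton)
  then have G_meas: "(\<lambda>y. ennreal (gram_det l y powr (p / 2))) \<in> borel_measurable ?T"
    by measurable
  have Y_meas: "?Y \<in> measurable M ?T"
    using indep_XY by (rule M.indep_var_rv2)
  have "(\<integral>\<^sup>+\<omega>. ennreal (gram_det (k + l) (\<lambda>a. if a < k then X a \<omega> else Y (a - k) \<omega>) powr (p / 2)) \<partial>M)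
      = (\<integral>\<^sup>+\<omega>. H (restrict (\<lambda>i. X i \<omega>) {..<k}, ?Y \<omega>) \<partial>M)"
    unfolding H_def by (intro nn_integral_cong arg_cong[where f = ennreal] arg_cong2[where f = "(powr)"] gram_det_cong) auto
  also have "\<dots> = (\<integral>\<^sup>+y. (\<integral>\<^sup>+x. H (x, y) \<partial>PiM {..<k} (\<lambda>_. std_gaussian)) \<partial>distr M ?T ?Y)"
    using M.nn_integral_indep_var[OF indep_XY H_meas] distr_restrict_indep_std_gaussian[OF M X indep_X]
    by simp
  also have "\<dots> = (\<integral>\<^sup>+y. ennreal c * ennreal (gram_det l y powr (p / 2)) \<partial>distr M ?T ?Y)"
  proof (rule nn_integral_cong)
    fix y :: "nat \<Rightarrow> real^'d"
    have "(\<integral>\<^sup>+x. H (x, y) \<partial>PiM {..<k} (\<lambda>_. std_gaussian)) = ennreal (c * gram_det l y powr (p / 2))"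
      unfolding H_def fst_conv snd_conv c_def by (rule nn_integral_gram_det_std_gaussians[OF kl p])
    then show "(\<integral>\<^sup>+x. H (x, y) \<partial>PiM {..<k} (\<lambda>_. std_gaussian)) = ennreal c * ennreal (gram_det l y powr (p / 2))"
      by (simp add: ennreal_mult'')
  qed
  also have "\<dots> = ennreal c * (\<integral>\<^sup>+\<omega>. ennreal (gram_det l (?Y \<omega>) powr (p / 2)) \<partial>M)"
    using Y_meas G_meas by (simp add: nn_integral_cmult nn_integral_distr)
  also have "(\<integral>\<^sup>+\<omega>. ennreal (gram_det l (?Y \<omega>) powr (p / 2)) \<partial>M)
      = (\<integral>\<^sup>+\<omega>. ennreal (gram_det l (\<lambda>a. Y a \<omega>) powr (p / 2)) \<partial>M)"
    by (intro nn_integral_cong arg_cong[where f = ennreal] arg_cong2[where f = "(powr)"] gram_det_cong) auto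
  finally show ?thesis
    by (simp add: c_def)
qed

section \<open>Volumes of simplices\<close>

lemma nn_integral_simplex_vol_powr:
  assumes "\<And>a. a < j \<Longrightarrow> (\<lambda>\<omega>. Z \<omega> a) \<in> borel_measurable M"
  shows "(\<integral>\<^sup>+\<omega>. ennreal (simplex_vol j (Z \<omega>) powr p) \<partial>M)
       = ennreal (1 / fact j powr p) * (\<integral>\<^sup>+\<omega>. ennreal (gram_det j (Z \<omega>) powr (p / 2)) \<partial>M)"
proof -
  have [measurable]: "(\<lambda>\<omega>. gram_det j (Z \<omega>)) \<in> borel_measurable M"
    using assms by (rule borel_measurable_gram_det)
  have "(\<integral>\<^sup>+\<omega>. ennreal (simplex_vol j (Z \<omega>) powr p) \<partial>M)
      = (\<integral>\<^sup>+\<omega>. ennreal (1 / fact j powr p) * ennreal (gram_det j (Z \<omega>) powr (p / 2)) \<partial>M)"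
    by (intro nn_integral_cong) (simp add: simplex_vol_powr ennreal_mult'[symmetric])
  also have "\<dots> = ennreal (1 / fact j powr p) * (\<integral>\<^sup>+\<omega>. ennreal (gram_det j (Z \<omega>) powr (p / 2)) \<partial>M)"
    by (rule nn_integral_cmult) measurable
  finally show ?thesis .
qed

lemma simplex_moment_constant:
  assumes kl: "k + l \<le> d" and p: "p \<ge> 0"
  shows "ennreal (1 / fact (k + l) powr p) * (ennreal (\<Prod>i\<in>{d - l - k + 1..d - l}. chi_moment i p) * I)
       = ennreal (((2 powr (real k / 2) * fact l) / fact (k + l)) powr p
           * (\<Prod>i\<in>{d - l - k + 1..d - l}. Gamma ((real i + p) / 2) / Gamma (real i / 2)))
         * (ennreal (1 / fact l powr p) * I)"
proof -
  let ?R = "{d - l - k + 1..d - l}"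
  let ?\<Gamma> = "\<Prod>i\<in>?R. Gamma ((real i + p) / 2) / Gamma (real i / 2)"
  have card_R: "card ?R = k"
    using kl by simp
  have "(\<Prod>i\<in>?R. chi_moment i p) = (\<Prod>i\<in>?R. 2 powr (p / 2) * (Gamma ((real i + p) / 2) / Gamma (real i / 2)))"
    unfolding chi_moment_def by (simp add: mult.assoc)
  also have "\<dots> = (2 powr (p / 2)) ^ k * ?\<Gamma>"
    by (subst prod.distrib) (simp only: prod_constant card_R)
  finally have "1 / fact (k + l) powr p * (\<Prod>i\<in>?R. chi_moment i p)
      = ((2 powr (real k / 2) * fact l) / fact (k + l)) powr p * ?\<Gamma> * (1 / fact l powr p)"
    by (simp add: powr_power powr_divide powr_mult powr_powr mult_ac)
  moreover have "((2 powr (real k / 2) * fact l) / fact (k + l)) powr p * ?\<Gamma> \<ge> 0"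
    using p by (intro mult_nonneg_nonneg prod_nonneg divide_nonneg_nonneg less_imp_le[OF Gamma_real_pos]) auto
  ultimately show ?thesis
    by (metis (no_types, lifting) ennreal_mult' ab_semigroup_mult_class.mult_ac(1) divide_nonneg_nonneg
        powr_ge_zero zero_less_one_class.zero_le_one)
qed

theorem mainTheorem13:
  fixes M :: "'w measure"
    and X Y :: "nat \<Rightarrow> 'w \<Rightarrow> real ^ 'd"
    and k l :: nat and p :: real
  assumes "prob_space M"
    and "k + l \<le> CARD('d)"
    and "\<And>i. i < k \<Longrightarrow> distributed M lborel (X i) (\<lambda>x. ennreal (std_gaussian_density x))"
    and "prob_space.indep_vars M (\<lambda>_. borel) X {..<k}"
    and "\<And>j. j < l \<Longrightarrow> Y j \<in> borel_measurable M"
    and "prob_space.indep_var M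
           (PiM {..<k} (\<lambda>_. borel)) (\<lambda>\<omega>. restrict (\<lambda>i. X i \<omega>) {..<k})
           (PiM {..<l} (\<lambda>_. borel)) (\<lambda>\<omega>. restrict (\<lambda>j. Y j \<omega>) {..<l})"
    and "p > 0"
  shows "(\<integral>\<^sup>+ \<omega>. ennreal (simplex_vol (k + l)
              (\<lambda>a. if a < k then X a \<omega> else Y (a - k) \<omega>) powr p) \<partial>M)
         = ennreal (((2 powr (real k / 2) * fact l) / fact (k + l)) powr p
              * (\<Prod>i\<in>{CARD('d) - l - k + 1 .. CARD('d) - l}.
                   Gamma ((real i + p) / 2) / Gamma (real i / 2)))
           * (\<integral>\<^sup>+ \<omega>. ennreal (simplex_vol l (\<lambda>a. Y a \<omega>) powr p) \<partial>M)"
proof -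
  let ?Z = "\<lambda>\<omega> a. if a < k then X a \<omega> else Y (a - k) \<omega>"
  let ?I = "\<integral>\<^sup>+\<omega>. ennreal (gram_det l (\<lambda>a. Y a \<omega>) powr (p / 2)) \<partial>M"
  have p: "p \<ge> 0"
    using assms(7) by simp
  have Z: "(\<lambda>\<omega>. ?Z \<omega> a) \<in> borel_measurable M" if "a < k + l" for a
    using assms(3,5) that by (cases "a < k") (auto simp: distributed_def cong: measurable_cong_sets)
  have "(\<integral>\<^sup>+\<omega>. ennreal (simplex_vol (k + l) (?Z \<omega>) powr p) \<partial>M)
      = ennreal (1 / fact (k + l) powr p)
        * (ennreal (\<Prod>i\<in>{CARD('d) - l - k + 1..CARD('d) - l}. chi_moment i p) * ?I)"
    using nn_integral_simplex_vol_powr[OF Z] nn_integral_gram_det_indep_std_gaussians[OF assms(1-4,6) p]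
    by simp
  also note simplex_moment_constant[OF assms(2) p, where I = ?I]
  also have "ennreal (1 / fact l powr p) * ?I = (\<integral>\<^sup>+\<omega>. ennreal (simplex_vol l (\<lambda>a. Y a \<omega>) powr p) \<partial>M)"
    using nn_integral_simplex_vol_powr[of l "\<lambda>\<omega> a. Y a \<omega>", OF assms(5)] by simp
  finally show ?thesis .
qed

end
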